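(* Let $L,M,N$ be Lie superalgebras such that (i) $L$ and $N$ act compatibly on one another, and $M$ and $N$ act compatibly on one another; (ii) ${}^{l}({}^{m}n)=(-1)^{|l||m|}\,{}^{m}({}^{l}n)$ for all homogeneous $l\in L$, $m\in M$, $n\in N$; (iii) the canonical homomorphisms $[L,N]^{N}\otimes M\to N\otimes M$ and $[M,N]^{N}\otimes L\to N\otimes L$ are trivial. Then $L\oplus M$ acts on $N$ by ${}^{(l,m)}n={}^{l}n+{}^{m}n$, $N$ acts on $L\oplus M$ by ${}^{n}(l,m)=({}^{n}l,{}^{n}m)$, and with these actions there is an isomorphism of Lie superalgebras \[(L\oplus M)\otimes N\cong (L\otimes N)\oplus(M\otimes N),\quad (l,m)\otimes n\mapsto (l\otimes n,\,m\otimes n).\]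
   Context: All algebras are over a field $\mathbb{F}$ of characteristic $\neq 2,3$. An action of a Lie superalgebra $P$ on a Lie superalgebra $M$ is an even bilinear map $(p,m)\mapsto {}^{p}m$ with ${}^{[p,p']}m={}^{p}({}^{p'}m)-(-1)^{|p||p'|}{}^{p'}({}^{p}m)$ and ${}^{p}[m,m']=[{}^{p}m,m']+(-1)^{|p||m|}[m,{}^{p}m']$. Actions of $M$ and $N$ on each other are compatible if ${}^{({}^{n}m)}n'=-(-1)^{|m||n|}[{}^{m}n,n']$ and ${}^{({}^{m}n)}m'=-(-1)^{|m||n|}[{}^{n}m,m']$ for all homogeneous $m,m'\in M$, $n,n'\in N$. Given mutual actions, the non-abelian tensor product $M\otimes N$ is the Lie superalgebra generated by symbols $m\otimes n$ (homogeneous $m,n$, degree $|m|+|n|$) subject to: $\lambda(m\otimes n)=\lambda m\otimes n=m\otimes\lambda n$; additivity in each variable (for elements of the same degree); $[m,m']\otimes n=m\otimes{}^{m'}n-(-1)^{|m||m'|}m'\otimes{}^{m}n$; $m\otimes[n,n']=(-1)^{|n'|(|m|+|n|)}{}^{n'}m\otimes n-(-1)^{|m||n|}{}^{n}m\otimes n'$; $[m\otimes n,m'\otimes n']=-(-1)^{|m||n|}\,{}^{n}m\otimes{}^{m'}n'$. For an action of $L$ on $N$, $[L,N]^{N}$ denotes the graded ideal of $N$ spanned by the elements ${}^{l}n$. *)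

theory Defs
  imports Main
begin

text \<open>Degrees are booleans (True = odd); the sign (-1)^(|x||y|) is sg (i \<and> j).\<close>

record ('a, 'k) lsa =
  car :: "'a set"
  zr  :: 'a
  ad  :: "'a \<Rightarrow> 'a \<Rightarrow> 'a"
  sc  :: "'k \<Rightarrow> 'a \<Rightarrow> 'a"
  br  :: "'a \<Rightarrow> 'a \<Rightarrow> 'a"
  gr  :: "bool \<Rightarrow> 'a set"

definition sg :: "bool \<Rightarrow> 'k::field" where
  "sg b = (if b then -1 else 1)"

definition lsub :: "('a, 'k::field) lsa \<Rightarrow> 'a \<Rightarrow> 'a \<Rightarrow> 'a" where
  "lsub A x y = ad A x (sc A (-1) y)"

definition subspace :: "('a, 'k::field) lsa \<Rightarrow> 'a set \<Rightarrow> bool" where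
  "subspace A U \<longleftrightarrow> U \<subseteq> car A \<and> zr A \<in> U \<and> (\<forall>x\<in>U. \<forall>y\<in>U. ad A x y \<in> U)
     \<and> (\<forall>c. \<forall>x\<in>U. sc A c x \<in> U)"

definition vector_space :: "('a, 'k::field) lsa \<Rightarrow> bool" where
  "vector_space A \<longleftrightarrow> subspace A (car A)
    \<and> (\<forall>x\<in>car A. \<forall>y\<in>car A. \<forall>z\<in>car A. ad A (ad A x y) z = ad A x (ad A y z))
    \<and> (\<forall>x\<in>car A. \<forall>y\<in>car A. ad A x y = ad A y x)
    \<and> (\<forall>x\<in>car A. ad A (zr A) x = x)
    \<and> (\<forall>x\<in>car A. ad A x (sc A (-1) x) = zr A)
    \<and> (\<forall>c. \<forall>x\<in>car A. \<forall>y\<in>car A. sc A c (ad A x y) = ad A (sc A c x) (sc A c y))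
    \<and> (\<forall>c d. \<forall>x\<in>car A. sc A (c + d) x = ad A (sc A c x) (sc A d x))
    \<and> (\<forall>c d. \<forall>x\<in>car A. sc A (c * d) x = sc A c (sc A d x))
    \<and> (\<forall>x\<in>car A. sc A 1 x = x)"

definition graded :: "('a, 'k::field) lsa \<Rightarrow> bool" where
  "graded A \<longleftrightarrow> (\<forall>b. subspace A (gr A b)) \<and> gr A False \<inter> gr A True = {zr A}
    \<and> (\<forall>x\<in>car A. \<exists>x0\<in>gr A False. \<exists>x1\<in>gr A True. x = ad A x0 x1)"

definition lie_superalgebra :: "('a, 'k::field) lsa \<Rightarrow> bool" where
  "lie_superalgebra A \<longleftrightarrow> vector_space A \<and> graded A
    \<and> (\<forall>x\<in>car A. \<forall>y\<in>car A. br A x y \<in> car A)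
    \<and> (\<forall>x\<in>car A. \<forall>y\<in>car A. \<forall>z\<in>car A.
          br A (ad A x y) z = ad A (br A x z) (br A y z)
        \<and> br A z (ad A x y) = ad A (br A z x) (br A z y))
    \<and> (\<forall>c. \<forall>x\<in>car A. \<forall>y\<in>car A. br A (sc A c x) y = sc A c (br A x y)
        \<and> br A x (sc A c y) = sc A c (br A x y))
    \<and> (\<forall>i j. \<forall>x\<in>gr A i. \<forall>y\<in>gr A j. br A x y \<in> gr A (i \<noteq> j))
    \<and> (\<forall>i j. \<forall>x\<in>gr A i. \<forall>y\<in>gr A j. br A x y = sc A (- sg (i \<and> j)) (br A y x))
    \<and> (\<forall>i j. \<forall>x\<in>gr A i. \<forall>y\<in>gr A j. \<forall>z\<in>car A.
          br A x (br A y z) = ad A (br A (br A x y) z) (sc A (sg (i \<and> j)) (br A y (br A x z))))"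

definition is_action :: "('p, 'k::field) lsa \<Rightarrow> ('m, 'k) lsa \<Rightarrow> ('p \<Rightarrow> 'm \<Rightarrow> 'm) \<Rightarrow> bool" where
  "is_action P M a \<longleftrightarrow>
      (\<forall>p\<in>car P. \<forall>m\<in>car M. a p m \<in> car M)
    \<and> (\<forall>p\<in>car P. \<forall>p'\<in>car P. \<forall>m\<in>car M. a (ad P p p') m = ad M (a p m) (a p' m))
    \<and> (\<forall>c. \<forall>p\<in>car P. \<forall>m\<in>car M. a (sc P c p) m = sc M c (a p m))
    \<and> (\<forall>p\<in>car P. \<forall>m\<in>car M. \<forall>m'\<in>car M. a p (ad M m m') = ad M (a p m) (a p m'))
    \<and> (\<forall>c. \<forall>p\<in>car P. \<forall>m\<in>car M. a p (sc M c m) = sc M c (a p m))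
    \<and> (\<forall>i j. \<forall>p\<in>gr P i. \<forall>m\<in>gr M j. a p m \<in> gr M (i \<noteq> j))
    \<and> (\<forall>i j. \<forall>p\<in>gr P i. \<forall>p'\<in>gr P j. \<forall>m\<in>car M.
         a (br P p p') m = lsub M (a p (a p' m)) (sc M (sg (i \<and> j)) (a p' (a p m))))
    \<and> (\<forall>i j. \<forall>p\<in>gr P i. \<forall>m\<in>gr M j. \<forall>m'\<in>car M.
         a p (br M m m') = ad M (br M (a p m) m') (sc M (sg (i \<and> j)) (br M m (a p m'))))"

definition compatible :: "('m, 'k::field) lsa \<Rightarrow> ('n, 'k) lsa \<Rightarrow> ('m \<Rightarrow> 'n \<Rightarrow> 'n) \<Rightarrow> ('n \<Rightarrow> 'm \<Rightarrow> 'm) \<Rightarrow> bool" where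
  "compatible M N aMN aNM \<longleftrightarrow>
      (\<forall>i j. \<forall>m\<in>gr M i. \<forall>n\<in>gr N j. \<forall>n'\<in>car N.
         aMN (aNM n m) n' = sc N (- sg (i \<and> j)) (br N (aMN m n) n'))
    \<and> (\<forall>i j. \<forall>m\<in>gr M i. \<forall>n\<in>gr N j. \<forall>m'\<in>car M.
         aNM (aMN m n) m' = sc M (- sg (i \<and> j)) (br M (aNM n m) m'))"

definition hom :: "('a, 'k::field) lsa \<Rightarrow> ('b, 'k) lsa \<Rightarrow> ('a \<Rightarrow> 'b) \<Rightarrow> bool" where
  "hom A B f \<longleftrightarrow> (\<forall>x\<in>car A. f x \<in> car B)
    \<and> (\<forall>x\<in>car A. \<forall>y\<in>car A. f (ad A x y) = ad B (f x) (f y))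
    \<and> (\<forall>c. \<forall>x\<in>car A. f (sc A c x) = sc B c (f x))
    \<and> (\<forall>x\<in>car A. \<forall>y\<in>car A. f (br A x y) = br B (f x) (f y))
    \<and> (\<forall>b. f ` gr A b \<subseteq> gr B b)"

definition iso :: "('a, 'k::field) lsa \<Rightarrow> ('b, 'k) lsa \<Rightarrow> ('a \<Rightarrow> 'b) \<Rightarrow> bool" where
  "iso A B f \<longleftrightarrow> hom A B f \<and> bij_betw f (car A) (car B)"

definition dsum :: "('a, 'k) lsa \<Rightarrow> ('b, 'k) lsa \<Rightarrow> ('a \<times> 'b, 'k) lsa" where
  "dsum A B = \<lparr> car = car A \<times> car B, zr = (zr A, zr B),
     ad = (\<lambda>(a, b) (a', b'). (ad A a a', ad B b b')),
     sc = (\<lambda>c (a, b). (sc A c a, sc B c b)),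
     br = (\<lambda>(a, b) (a', b'). (br A a a', br B b b')),
     gr = (\<lambda>i. gr A i \<times> gr B i) \<rparr>"

definition subalg :: "('a, 'k) lsa \<Rightarrow> 'a set \<Rightarrow> ('a, 'k) lsa" where
  "subalg A U = A\<lparr> car := U, gr := (\<lambda>b. gr A b \<inter> U) \<rparr>"

definition lspan :: "('a, 'k::field) lsa \<Rightarrow> 'a set \<Rightarrow> 'a set" where
  "lspan A S = \<Inter> {U. S \<subseteq> U \<and> subspace A U}"

text \<open>[L,N]^N : the (graded ideal of N) spanned by the elements {}^l n.\<close>
definition act_ideal :: "('l, 'k::field) lsa \<Rightarrow> ('n, 'k) lsa \<Rightarrow> ('l \<Rightarrow> 'n \<Rightarrow> 'n) \<Rightarrow> 'n set" where
  "act_ideal L N a = lspan N {a l n | l n. l \<in> car L \<and> n \<in> car N}"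

definition dsum_act :: "('n, 'k) lsa \<Rightarrow> ('l \<Rightarrow> 'n \<Rightarrow> 'n) \<Rightarrow> ('m \<Rightarrow> 'n \<Rightarrow> 'n) \<Rightarrow> ('l \<times> 'm \<Rightarrow> 'n \<Rightarrow> 'n)" where
  "dsum_act N aLN aMN = (\<lambda>(l, m) n. ad N (aLN l n) (aMN m n))"

definition act_dsum :: "('n \<Rightarrow> 'l \<Rightarrow> 'l) \<Rightarrow> ('n \<Rightarrow> 'm \<Rightarrow> 'm) \<Rightarrow> ('n \<Rightarrow> 'l \<times> 'm \<Rightarrow> 'l \<times> 'm)" where
  "act_dsum aNL aNM = (\<lambda>n (l, m). (aNL n l, aNM n m))"

definition fvs :: "'g set \<Rightarrow> ('g \<Rightarrow> 'k::zero) set" where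
  "fvs G = {f. finite {x. f x \<noteq> 0} \<and> (\<forall>x. f x \<noteq> 0 \<longrightarrow> x \<in> G)}"

definition fvs_gr :: "'g set \<Rightarrow> ('g \<Rightarrow> bool) \<Rightarrow> bool \<Rightarrow> ('g \<Rightarrow> 'k::zero) set" where
  "fvs_gr G dg b = {f \<in> fvs G. \<forall>x. f x \<noteq> 0 \<longrightarrow> dg x = b}"

definition fadd :: "('g \<Rightarrow> 'k::field) \<Rightarrow> ('g \<Rightarrow> 'k) \<Rightarrow> ('g \<Rightarrow> 'k)" where
  "fadd f g = (\<lambda>x. f x + g x)"

definition fsc :: "'k::field \<Rightarrow> ('g \<Rightarrow> 'k) \<Rightarrow> ('g \<Rightarrow> 'k)" where
  "fsc c f = (\<lambda>x. c * f x)"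

definition fminus :: "('g \<Rightarrow> 'k::field) \<Rightarrow> ('g \<Rightarrow> 'k) \<Rightarrow> ('g \<Rightarrow> 'k)" where
  "fminus f g = fadd f (fsc (-1) g)"

definition fzero :: "'g \<Rightarrow> 'k::field" where
  "fzero = (\<lambda>_. 0)"

definition dl :: "'g \<Rightarrow> ('g \<Rightarrow> 'k::field)" where
  "dl g = (\<lambda>x. if x = g then 1 else 0)"

definition fproj :: "('g \<Rightarrow> bool) \<Rightarrow> bool \<Rightarrow> ('g \<Rightarrow> 'k::field) \<Rightarrow> ('g \<Rightarrow> 'k)" where
  "fproj dg b f = (\<lambda>x. if dg x = b then f x else 0)"

text \<open>Bilinear extension of a map on basis elements: [dl p, dl q] = c p q * dl (b p q).\<close>
definition fbil :: "('g \<Rightarrow> 'g \<Rightarrow> 'g) \<Rightarrow> ('g \<Rightarrow> 'g \<Rightarrow> 'k::field) \<Rightarrow> ('g \<Rightarrow> 'k) \<Rightarrow> ('g \<Rightarrow> 'k) \<Rightarrow> ('g \<Rightarrow> 'k)" where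
  "fbil b c f g = (\<lambda>x. \<Sum>p\<in>{p. f p \<noteq> 0}. \<Sum>q\<in>{q. g q \<noteq> 0}.
                       if b p q = x then f p * g q * c p q else 0)"

definition coset :: "('g \<Rightarrow> 'k::field) set \<Rightarrow> ('g \<Rightarrow> 'k) \<Rightarrow> ('g \<Rightarrow> 'k) set" where
  "coset K f = {fadd f k | k. k \<in> K}"

definition rep :: "('g \<Rightarrow> 'k) set \<Rightarrow> ('g \<Rightarrow> 'k)" where
  "rep X = (SOME f. f \<in> X)"

text \<open>The generator m \<otimes> n, for m homogeneous of degree i and n homogeneous of degree j,
  is indexed by (m, n, i, j); it has degree i + j.\<close>

definition tgens :: "('m, 'k) lsa \<Rightarrow> ('n, 'k) lsa \<Rightarrow> ('m \<times> 'n \<times> bool \<times> bool) set" where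
  "tgens M N = {(m, n, i, j) | m n i j. m \<in> gr M i \<and> n \<in> gr N j}"

definition tdeg :: "'m \<times> 'n \<times> bool \<times> bool \<Rightarrow> bool" where
  "tdeg g = (case g of (m, n, i, j) \<Rightarrow> i \<noteq> j)"

text \<open>[m \<otimes> n, m' \<otimes> n'] = -(-1)^(|m||n|) ({}^n m \<otimes> {}^m' n').\<close>
definition tgb :: "('m \<Rightarrow> 'n \<Rightarrow> 'n) \<Rightarrow> ('n \<Rightarrow> 'm \<Rightarrow> 'm)
    \<Rightarrow> 'm \<times> 'n \<times> bool \<times> bool \<Rightarrow> 'm \<times> 'n \<times> bool \<times> bool \<Rightarrow> 'm \<times> 'n \<times> bool \<times> bool" where
  "tgb aMN aNM g h = (case g of (m, n, i, j) \<Rightarrow> case h of (m', n', i', j') \<Rightarrow>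
       (aNM n m, aMN m' n', i \<noteq> j, i' \<noteq> j'))"

definition tgc :: "'m \<times> 'n \<times> bool \<times> bool \<Rightarrow> 'm \<times> 'n \<times> bool \<times> bool \<Rightarrow> 'k::field" where
  "tgc g h = (case g of (m, n, i, j) \<Rightarrow> - sg (i \<and> j))"

definition tbr :: "('m \<Rightarrow> 'n \<Rightarrow> 'n) \<Rightarrow> ('n \<Rightarrow> 'm \<Rightarrow> 'm)
    \<Rightarrow> ('m \<times> 'n \<times> bool \<times> bool \<Rightarrow> 'k::field) \<Rightarrow> ('m \<times> 'n \<times> bool \<times> bool \<Rightarrow> 'k)
    \<Rightarrow> ('m \<times> 'n \<times> bool \<times> bool \<Rightarrow> 'k)" where
  "tbr aMN aNM = fbil (tgb aMN aNM) tgc"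

definition trels :: "('m, 'k::field) lsa \<Rightarrow> ('n, 'k) lsa \<Rightarrow> ('m \<Rightarrow> 'n \<Rightarrow> 'n) \<Rightarrow> ('n \<Rightarrow> 'm \<Rightarrow> 'm)
    \<Rightarrow> ('m \<times> 'n \<times> bool \<times> bool \<Rightarrow> 'k) set" where
  "trels M N aMN aNM =
      {fminus (fsc c (dl (m, n, i, j))) (dl (sc M c m, n, i, j)) | c m n i j.
          m \<in> gr M i \<and> n \<in> gr N j}
    \<union> {fminus (fsc c (dl (m, n, i, j))) (dl (m, sc N c n, i, j)) | c m n i j.
          m \<in> gr M i \<and> n \<in> gr N j}
    \<union> {fminus (dl (ad M m m', n, i, j)) (fadd (dl (m, n, i, j)) (dl (m', n, i, j))) | m m' n i j.
          m \<in> gr M i \<and> m' \<in> gr M i \<and> n \<in> gr N j}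
    \<union> {fminus (dl (m, ad N n n', i, j)) (fadd (dl (m, n, i, j)) (dl (m, n', i, j))) | m n n' i j.
          m \<in> gr M i \<and> n \<in> gr N j \<and> n' \<in> gr N j}
    \<union> {fadd (fminus (dl (br M m m', n, i \<noteq> i', j)) (dl (m, aMN m' n, i, i' \<noteq> j)))
            (fsc (sg (i \<and> i')) (dl (m', aMN m n, i', i \<noteq> j))) | m m' n i i' j.
          m \<in> gr M i \<and> m' \<in> gr M i' \<and> n \<in> gr N j}
    \<union> {fadd (fminus (dl (m, br N n n', i, j \<noteq> j'))
                    (fsc (sg (j' \<and> (i \<noteq> j))) (dl (aNM n' m, n, i \<noteq> j', j))))
            (fsc (sg (i \<and> j)) (dl (aNM n m, n', i \<noteq> j, j'))) | m n n' i j j'.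
          m \<in> gr M i \<and> n \<in> gr N j \<and> n' \<in> gr N j'}"

text \<open>Subspaces K of the free vector space V on the generators such that V/K, with the
  bracket induced by [m \<otimes> n, m' \<otimes> n'] = -(-1)^(|m||n|) {}^n m \<otimes> {}^m' n', is a
  Lie superalgebra in which the linear relations hold.  The non-abelian tensor
  product (the Lie superalgebra presented by the generators and relations) is V/K
  for the smallest such K.\<close>
definition tgood :: "('m, 'k::field) lsa \<Rightarrow> ('n, 'k) lsa \<Rightarrow> ('m \<Rightarrow> 'n \<Rightarrow> 'n) \<Rightarrow> ('n \<Rightarrow> 'm \<Rightarrow> 'm)
    \<Rightarrow> ('m \<times> 'n \<times> bool \<times> bool \<Rightarrow> 'k) set \<Rightarrow> bool" where
  "tgood M N aMN aNM K \<longleftrightarrow>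
      K \<subseteq> fvs (tgens M N) \<and> fzero \<in> K
    \<and> (\<forall>x\<in>K. \<forall>y\<in>K. fadd x y \<in> K) \<and> (\<forall>c. \<forall>x\<in>K. fsc c x \<in> K)
    \<and> (\<forall>b. \<forall>x\<in>K. fproj tdeg b x \<in> K)
    \<and> trels M N aMN aNM \<subseteq> K
    \<and> (\<forall>f\<in>fvs (tgens M N). \<forall>k\<in>K. tbr aMN aNM f k \<in> K \<and> tbr aMN aNM k f \<in> K)
    \<and> (\<forall>a b. \<forall>f\<in>fvs_gr (tgens M N) tdeg a. \<forall>g\<in>fvs_gr (tgens M N) tdeg b.
         fadd (tbr aMN aNM f g) (fsc (sg (a \<and> b)) (tbr aMN aNM g f)) \<in> K)
    \<and> (\<forall>a b. \<forall>f\<in>fvs_gr (tgens M N) tdeg a. \<forall>g\<in>fvs_gr (tgens M N) tdeg b.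
         \<forall>h\<in>fvs (tgens M N).
         fminus (tbr aMN aNM f (tbr aMN aNM g h))
           (fadd (tbr aMN aNM (tbr aMN aNM f g) h)
                 (fsc (sg (a \<and> b)) (tbr aMN aNM g (tbr aMN aNM f h)))) \<in> K)"

definition tker :: "('m, 'k::field) lsa \<Rightarrow> ('n, 'k) lsa \<Rightarrow> ('m \<Rightarrow> 'n \<Rightarrow> 'n) \<Rightarrow> ('n \<Rightarrow> 'm \<Rightarrow> 'm)
    \<Rightarrow> ('m \<times> 'n \<times> bool \<times> bool \<Rightarrow> 'k) set" where
  "tker M N aMN aNM = \<Inter> {K. tgood M N aMN aNM K}"

definition tensor :: "('m, 'k::field) lsa \<Rightarrow> ('n, 'k) lsa \<Rightarrow> ('m \<Rightarrow> 'n \<Rightarrow> 'n) \<Rightarrow> ('n \<Rightarrow> 'm \<Rightarrow> 'm)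
    \<Rightarrow> (('m \<times> 'n \<times> bool \<times> bool \<Rightarrow> 'k) set, 'k) lsa" where
  "tensor M N aMN aNM =
     \<lparr> car = coset (tker M N aMN aNM) ` fvs (tgens M N),
       zr = coset (tker M N aMN aNM) fzero,
       ad = (\<lambda>X Y. coset (tker M N aMN aNM) (fadd (rep X) (rep Y))),
       sc = (\<lambda>c X. coset (tker M N aMN aNM) (fsc c (rep X))),
       br = (\<lambda>X Y. coset (tker M N aMN aNM) (tbr aMN aNM (rep X) (rep Y))),
       gr = (\<lambda>b. coset (tker M N aMN aNM) ` fvs_gr (tgens M N) tdeg b) \<rparr>"

definition tsym :: "('m, 'k::field) lsa \<Rightarrow> ('n, 'k) lsa \<Rightarrow> ('m \<Rightarrow> 'n \<Rightarrow> 'n) \<Rightarrow> ('n \<Rightarrow> 'm \<Rightarrow> 'm)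
    \<Rightarrow> 'm \<Rightarrow> 'n \<Rightarrow> bool \<Rightarrow> bool \<Rightarrow> ('m \<times> 'n \<times> bool \<times> bool \<Rightarrow> 'k) set" where
  "tsym M N aMN aNM m n i j = coset (tker M N aMN aNM) (dl (m, n, i, j))"

text \<open>The canonical homomorphism I \<otimes> M \<rightarrow> N \<otimes> M (I a graded ideal of N, with the restricted
  actions), x \<otimes> m \<mapsto> x \<otimes> m, exists and is trivial.\<close>
definition canon_trivial :: "('n, 'k::field) lsa \<Rightarrow> 'n set \<Rightarrow> ('m, 'k) lsa
    \<Rightarrow> ('n \<Rightarrow> 'm \<Rightarrow> 'm) \<Rightarrow> ('m \<Rightarrow> 'n \<Rightarrow> 'n) \<Rightarrow> bool" where
  "canon_trivial N I M aNM aMN \<longleftrightarrow>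
     (\<exists>\<phi>. hom (tensor (subalg N I) M aNM aMN) (tensor N M aNM aMN) \<phi>
        \<and> (\<forall>x m i j. x \<in> gr N i \<inter> I \<and> m \<in> gr M j \<longrightarrow>
             \<phi> (tsym (subalg N I) M aNM aMN x m i j) = tsym N M aNM aMN x m i j)
        \<and> (\<forall>X\<in>car (tensor (subalg N I) M aNM aMN). \<phi> X = zr (tensor N M aNM aMN)))"

end

theory Submission
  imports Defs
begin

(*
  The tensor product is a quotient of the free vector space on the generators m \<otimes> n by the
  smallest subspace containing the defining relations and closed under the bracket.  So a map of
  generators that sends relations to relations and respects the bracket modulo relations induces
  a homomorphism of tensor products.  The projections of L \<oplus> M onto L and M and the two
  inclusions give four such maps.  For the projections, the generators l \<otimes> {}^m n and
  m \<otimes> {}^l n left over from (l, m) \<otimes> n must vanish: this is hypothesis (iii), after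
  swapping the factors.  Hypothesis (ii) is what makes L \<oplus> M act on N.  On generators the
  pair of projections and the sum of the inclusions are visibly inverse to each other.
*)

section \<open>Free vector spaces\<close>

definition fin :: "('g \<Rightarrow> 'k::zero) \<Rightarrow> bool" where
  "fin f \<longleftrightarrow> finite {x. f x \<noteq> 0}"

text \<open>The linear extension of the generator map \<open>p \<mapsto> c p \<cdot> g p\<close>.\<close>

definition fmap :: "('g \<Rightarrow> 'h) \<Rightarrow> ('g \<Rightarrow> 'k::field) \<Rightarrow> ('g \<Rightarrow> 'k) \<Rightarrow> ('h \<Rightarrow> 'k)" where
  "fmap g c f = (\<lambda>y. \<Sum>p\<in>{p. f p \<noteq> 0}. if g p = y then c p * f p else 0)"

lemma sum_supp:
  assumes "finite A" "{p. f p \<noteq> 0} \<subseteq> A" "\<And>p. f p = 0 \<Longrightarrow> F p = 0"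
  shows "sum F {p. f p \<noteq> 0} = sum F A"
  by (rule sum.mono_neutral_left) (use assms in auto)

lemma fin_fadd: "fin f \<Longrightarrow> fin g \<Longrightarrow> fin (fadd f g)"
  unfolding fin_def fadd_def by (rule finite_subset[of _ "{x. f x \<noteq> 0} \<union> {x. g x \<noteq> 0}"]) auto
lemma fin_fsc: "fin f \<Longrightarrow> fin (fsc c f)"
  unfolding fin_def fsc_def by (rule finite_subset[of _ "{x. f x \<noteq> 0}"]) auto
lemma fin_fzero: "fin fzero" unfolding fin_def fzero_def by simp
lemma fin_dl: "fin (dl p)" unfolding fin_def dl_def by simp
lemma fin_fminus: "fin f \<Longrightarrow> fin g \<Longrightarrow> fin (fminus f g)"
  unfolding fminus_def by (simp add: fin_fadd fin_fsc)
lemma fvs_fin: "f \<in> fvs G \<Longrightarrow> fin f" unfolding fvs_def fin_def by auto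

lemma fvs_fadd: "f \<in> fvs G \<Longrightarrow> g \<in> fvs G \<Longrightarrow> fadd f g \<in> fvs G"
  using fin_fadd[of f g] unfolding fvs_def fin_def fadd_def by (auto, metis add.right_neutral)
lemma fvs_fsc: "f \<in> fvs G \<Longrightarrow> fsc c f \<in> fvs G"
  using fin_fsc[of f c] unfolding fvs_def fin_def fsc_def by auto
lemma fvs_fzero: "fzero \<in> fvs G" unfolding fvs_def fzero_def by simp
lemma fvs_dl: "p \<in> G \<Longrightarrow> dl p \<in> fvs G" unfolding fvs_def dl_def by auto
lemma fvs_fminus: "f \<in> fvs G \<Longrightarrow> g \<in> fvs G \<Longrightarrow> fminus f g \<in> fvs G"
  unfolding fminus_def by (simp add: fvs_fadd fvs_fsc)
lemma fvs_fproj: "f \<in> fvs G \<Longrightarrow> fproj dg b f \<in> fvs G"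
  unfolding fvs_def fproj_def by (auto elim: finite_subset[rotated])
lemma fvs_gr_sub: "fvs_gr G dg b \<subseteq> fvs G" unfolding fvs_gr_def by auto
lemma fsc_fzero: "fsc d fzero = fzero" unfolding fsc_def fzero_def by simp
lemma fsc_fsc: "fsc c (fsc d f) = fsc (c * d) f" unfolding fsc_def by (auto simp: mult_ac)
lemma fsc_one: "fsc 1 f = f" unfolding fsc_def by simp
lemma fadd_fzero: "fadd f fzero = f" "fadd fzero f = f" unfolding fadd_def fzero_def by simp_all

lemma fvs_induct_aux:
  assumes "finite S" "\<And>x. f x \<noteq> 0 \<Longrightarrow> x \<in> S" "\<And>x. f x \<noteq> 0 \<Longrightarrow> x \<in> G"
    and z: "P fzero" and g: "\<And>c p. p \<in> G \<Longrightarrow> P (fsc c (dl p))"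
    and a: "\<And>f g. f \<in> fvs G \<Longrightarrow> g \<in> fvs G \<Longrightarrow> P f \<Longrightarrow> P g \<Longrightarrow> P (fadd f g)"
  shows "P f"
  using assms(1,2,3)
proof (induction S arbitrary: f rule: finite_induct)
  case empty
  then have "f = fzero" unfolding fzero_def by auto
  then show ?case using z by simp
next
  case (insert q S)
  define f' where "f' = f(q := 0)"
  have f'S: "\<And>x. f' x \<noteq> 0 \<Longrightarrow> x \<in> S" using insert(4) unfolding f'_def by (auto split: if_splits)
  have f'G: "\<And>x. f' x \<noteq> 0 \<Longrightarrow> x \<in> G" using insert(5) unfolding f'_def by (auto split: if_splits)
  have Pf': "P f'" using insert.IH f'S f'G by blast
  have fe: "f = fadd (fsc (f q) (dl q)) f'"
    unfolding fadd_def fsc_def dl_def f'_def by auto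
  have f'v: "f' \<in> fvs G" unfolding fvs_def using f'S f'G insert(1)
    by (auto elim: finite_subset[rotated])
  show ?case
  proof (cases "f q = 0")
    case True
    then have "f = f'" unfolding f'_def by auto
    then show ?thesis using Pf' by simp
  next
    case False
    then have qG: "q \<in> G" using insert(5) by auto
    have "P (fadd (fsc (f q) (dl q)) f')"
      by (rule a) (use qG f'v Pf' g fvs_fsc[OF fvs_dl[OF qG]] in auto)
    then show ?thesis using fe by simp
  qed
qed

lemma fvs_induct[consumes 1, case_names zero gen add]:
  assumes "f \<in> fvs G" and "P fzero" and "\<And>c p. p \<in> G \<Longrightarrow> P (fsc c (dl p))"
    and "\<And>f g. f \<in> fvs G \<Longrightarrow> g \<in> fvs G \<Longrightarrow> P f \<Longrightarrow> P g \<Longrightarrow> P (fadd f g)"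
  shows "P f"
  using assms(1) by (intro fvs_induct_aux[of "{x. f x \<noteq> 0}" f G P]) (use assms in \<open>auto simp: fvs_def\<close>)

lemma fmap_eq:
  assumes "finite A" "{p. f p \<noteq> 0} \<subseteq> A"
  shows "fmap g c f y = (\<Sum>p\<in>A. if g p = y then c p * f p else 0)"
  unfolding fmap_def by (rule sum_supp) (use assms in auto)

lemma fbil_eq:
  assumes "finite A" "{p. f p \<noteq> 0} \<subseteq> A" "finite B" "{q. h q \<noteq> 0} \<subseteq> B"
  shows "fbil b c f h x = (\<Sum>p\<in>A. \<Sum>q\<in>B. if b p q = x then f p * h q * c p q else 0)"
proof -
  have "fbil b c f h x = (\<Sum>p\<in>{p. f p \<noteq> 0}. \<Sum>q\<in>B. if b p q = x then f p * h q * c p q else 0)"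
    unfolding fbil_def by (rule sum.cong[OF refl], rule sum_supp) (use assms in auto)
  also have "\<dots> = (\<Sum>p\<in>A. \<Sum>q\<in>B. if b p q = x then f p * h q * c p q else 0)"
    by (rule sum_supp) (use assms in \<open>simp_all cong: if_cong\<close>)
  finally show ?thesis .
qed

lemma supp_fadd: "{p. fadd f g p \<noteq> 0} \<subseteq> {p. f p \<noteq> 0} \<union> {p. g p \<noteq> 0}"
  unfolding fadd_def by auto

lemma fmap_fadd:
  assumes "fin f" "fin f'"
  shows "fmap g c (fadd f f') = fadd (fmap g c f) (fmap g c f')"
proof
  fix y
  let ?A = "{p. f p \<noteq> 0} \<union> {p. f' p \<noteq> 0}"
  have fA: "finite ?A" using assms unfolding fin_def by auto
  have "fmap g c (fadd f f') y = (\<Sum>p\<in>?A. if g p = y then c p * fadd f f' p else 0)"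
    by (rule fmap_eq[OF fA]) (use supp_fadd in \<open>auto simp: fadd_def\<close>)
  also have "\<dots> = (\<Sum>p\<in>?A. if g p = y then c p * f p else 0) + (\<Sum>p\<in>?A. if g p = y then c p * f' p else 0)"
    unfolding fadd_def sum.distrib[symmetric] by (intro sum.cong refl) (simp add: distrib_left)
  also have "\<dots> = fmap g c f y + fmap g c f' y"
    by (simp add: fmap_eq[OF fA])
  finally show "fmap g c (fadd f f') y = fadd (fmap g c f) (fmap g c f') y" by (simp add: fadd_def)
qed

lemma fmap_fsc:
  assumes "fin f"
  shows "fmap g c (fsc d f) = fsc d (fmap g c f)"
proof
  fix y
  let ?A = "{p. f p \<noteq> 0}"
  have fA: "finite ?A" using assms unfolding fin_def by auto
  have "fmap g c (fsc d f) y = (\<Sum>p\<in>?A. if g p = y then c p * fsc d f p else 0)"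
    by (rule fmap_eq[OF fA]) (auto simp: fsc_def)
  also have "\<dots> = (\<Sum>p\<in>?A. if g p = y then c p * (d * f p) else 0)" unfolding fsc_def by simp
  also have "\<dots> = d * (\<Sum>p\<in>?A. if g p = y then c p * f p else 0)"
    by (simp add: sum_distrib_left; rule sum.cong; simp)
  finally show "fmap g c (fsc d f) y = fsc d (fmap g c f) y" by (simp add: fsc_def fmap_def)
qed

lemma fmap_fzero: "fmap g c fzero = fzero"
  unfolding fmap_def fzero_def by simp

lemma fmap_dl: fixes c :: "'g \<Rightarrow> 'k::field" shows "fmap g c (dl p) = fsc (c p) (dl (g p))"
proof
  fix y
  have "{q. dl p q \<noteq> (0::'k)} = {p}" unfolding dl_def by auto
  then show "fmap g c (dl p) y = fsc (c p) (dl (g p)) y"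
    unfolding fmap_def by (simp add: dl_def fsc_def)
qed

lemma fmap_fminus: "fin f \<Longrightarrow> fin f' \<Longrightarrow> fmap g c (fminus f f') = fminus (fmap g c f) (fmap g c f')"
  unfolding fminus_def by (simp add: fmap_fadd fmap_fsc fin_fsc)

lemma fmap_supp: "{y. fmap g c f y \<noteq> 0} \<subseteq> g ` {p. f p \<noteq> 0}"
proof
  fix y assume "y \<in> {y. fmap g c f y \<noteq> 0}"
  then have "(\<Sum>p\<in>{p. f p \<noteq> 0}. if g p = y then c p * f p else 0) \<noteq> 0" by (simp add: fmap_def)
  then obtain p where "f p \<noteq> 0" "(if g p = y then c p * f p else 0) \<noteq> 0"
    by (rule sum.not_neutral_contains_not_neutral) auto
  then have "f p \<noteq> 0" "g p = y" by (auto split: if_splits)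
  then show "y \<in> g ` {p. f p \<noteq> 0}" by auto
qed

lemma fin_fmap: "fin f \<Longrightarrow> fin (fmap g c f)"
  unfolding fin_def by (rule finite_subset[OF fmap_supp], rule finite_imageI)

lemma fvs_fmap:
  assumes "f \<in> fvs G" "\<And>p. p \<in> G \<Longrightarrow> g p \<in> G'"
  shows "fmap g c f \<in> fvs G'"
proof -
  have "fin (fmap g c f)" using fin_fmap fvs_fin assms(1) by blast
  moreover have "\<And>y. fmap g c f y \<noteq> 0 \<Longrightarrow> y \<in> G'"
    using fmap_supp[of g c f] assms unfolding fvs_def by blast
  ultimately show ?thesis unfolding fvs_def fin_def by auto
qed

lemma fvs_gr_fmap:
  assumes "f \<in> fvs_gr G dg b" "\<And>p. p \<in> G \<Longrightarrow> g p \<in> G'" "\<And>p. p \<in> G \<Longrightarrow> dg' (g p) = dg p"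
  shows "fmap g c f \<in> fvs_gr G' dg' b"
proof -
  have "f \<in> fvs G" using assms(1) unfolding fvs_gr_def by auto
  then have "fmap g c f \<in> fvs G'" using fvs_fmap assms(2) by blast
  moreover have "\<And>y. fmap g c f y \<noteq> 0 \<Longrightarrow> dg' y = b"
    using fmap_supp[of g c f] assms unfolding fvs_gr_def fvs_def by blast
  ultimately show ?thesis unfolding fvs_gr_def by auto
qed

lemma fbil_fadd1:
  assumes "fin f" "fin f'" "fin h"
  shows "fbil b c (fadd f f') h = fadd (fbil b c f h) (fbil b c f' h)"
proof
  fix x
  let ?A = "{p. f p \<noteq> 0} \<union> {p. f' p \<noteq> 0}" and ?B = "{q. h q \<noteq> 0}"
  have fA: "finite ?A" "finite ?B" using assms unfolding fin_def by auto
  have "fbil b c (fadd f f') h x = (\<Sum>p\<in>?A. \<Sum>q\<in>?B. if b p q = x then fadd f f' p * h q * c p q else 0)"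
    by (rule fbil_eq) (use fA supp_fadd in \<open>auto simp: fadd_def\<close>)
  also have "\<dots> = (\<Sum>p\<in>?A. \<Sum>q\<in>?B. if b p q = x then f p * h q * c p q else 0)
     + (\<Sum>p\<in>?A. \<Sum>q\<in>?B. if b p q = x then f' p * h q * c p q else 0)"
    unfolding fadd_def sum.distrib[symmetric] by (intro sum.cong refl) (simp add: distrib_right)
  also have "\<dots> = fbil b c f h x + fbil b c f' h x"
    by (simp add: fbil_eq[OF fA(1) _ fA(2)])
  finally show "fbil b c (fadd f f') h x = fadd (fbil b c f h) (fbil b c f' h) x" by (simp add: fadd_def)
qed

lemma fbil_fadd2:
  assumes "fin f" "fin h" "fin h'"
  shows "fbil b c f (fadd h h') = fadd (fbil b c f h) (fbil b c f h')"
proof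
  fix x
  let ?A = "{p. f p \<noteq> 0}" and ?B = "{q. h q \<noteq> 0} \<union> {q. h' q \<noteq> 0}"
  have fA: "finite ?A" "finite ?B" using assms unfolding fin_def by auto
  have "fbil b c f (fadd h h') x = (\<Sum>p\<in>?A. \<Sum>q\<in>?B. if b p q = x then f p * fadd h h' q * c p q else 0)"
    by (rule fbil_eq) (use fA supp_fadd in \<open>auto simp: fadd_def\<close>)
  also have "\<dots> = (\<Sum>p\<in>?A. \<Sum>q\<in>?B. if b p q = x then f p * h q * c p q else 0)
     + (\<Sum>p\<in>?A. \<Sum>q\<in>?B. if b p q = x then f p * h' q * c p q else 0)"
    unfolding fadd_def sum.distrib[symmetric] by (intro sum.cong refl) (simp add: distrib_right distrib_left)
  also have "\<dots> = fbil b c f h x + fbil b c f h' x"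
    by (simp add: fbil_eq[OF fA(1) _ fA(2)])
  finally show "fbil b c f (fadd h h') x = fadd (fbil b c f h) (fbil b c f h') x" by (simp add: fadd_def)
qed

lemma fbil_fsc1:
  assumes "fin f" "fin h"
  shows "fbil b c (fsc d f) h = fsc d (fbil b c f h)"
proof
  fix x
  let ?A = "{p. f p \<noteq> 0}" and ?B = "{q. h q \<noteq> 0}"
  have fA: "finite ?A" "finite ?B" using assms unfolding fin_def by auto
  have "fbil b c (fsc d f) h x = (\<Sum>p\<in>?A. \<Sum>q\<in>?B. if b p q = x then fsc d f p * h q * c p q else 0)"
    by (rule fbil_eq) (use fA in \<open>auto simp: fsc_def\<close>)
  also have "\<dots> = (\<Sum>p\<in>?A. \<Sum>q\<in>?B. d * (if b p q = x then f p * h q * c p q else 0))"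
    by (intro sum.cong refl) (simp add: fsc_def)
  also have "\<dots> = d * (\<Sum>p\<in>?A. \<Sum>q\<in>?B. if b p q = x then f p * h q * c p q else 0)"
    by (simp add: sum_distrib_left)
  also have "\<dots> = d * fbil b c f h x" by (simp add: fbil_eq[OF fA(1) _ fA(2)])
  finally show "fbil b c (fsc d f) h x = fsc d (fbil b c f h) x" by (simp add: fsc_def)
qed

lemma fbil_fsc2:
  assumes "fin f" "fin h"
  shows "fbil b c f (fsc d h) = fsc d (fbil b c f h)"
proof
  fix x
  let ?A = "{p. f p \<noteq> 0}" and ?B = "{q. h q \<noteq> 0}"
  have fA: "finite ?A" "finite ?B" using assms unfolding fin_def by auto
  have "fbil b c f (fsc d h) x = (\<Sum>p\<in>?A. \<Sum>q\<in>?B. if b p q = x then f p * fsc d h q * c p q else 0)"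
    by (rule fbil_eq) (use fA in \<open>auto simp: fsc_def\<close>)
  also have "\<dots> = (\<Sum>p\<in>?A. \<Sum>q\<in>?B. d * (if b p q = x then f p * h q * c p q else 0))"
    by (intro sum.cong refl) (simp add: fsc_def)
  also have "\<dots> = d * (\<Sum>p\<in>?A. \<Sum>q\<in>?B. if b p q = x then f p * h q * c p q else 0)"
    by (simp add: sum_distrib_left)
  also have "\<dots> = d * fbil b c f h x" by (simp add: fbil_eq[OF fA(1) _ fA(2)])
  finally show "fbil b c f (fsc d h) x = fsc d (fbil b c f h) x" by (simp add: fsc_def)
qed

lemma fbil_fzero1: "fbil b c fzero h = fzero" unfolding fbil_def fzero_def by simp
lemma fbil_fzero2: "fbil b c f fzero = fzero" unfolding fbil_def fzero_def by simp

lemma fbil_dl: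
  fixes c :: "'g \<Rightarrow> 'g \<Rightarrow> 'k::field"
  shows "fbil b c (dl p) (dl q) = fsc (c p q) (dl (b p q))"
proof
  fix x
  have s: "\<And>p. {q. dl p q \<noteq> (0::'k)} = {p}" unfolding dl_def by auto
  show "fbil b c (dl p) (dl q) x = fsc (c p q) (dl (b p q)) x"
    unfolding fbil_def s by (simp add: dl_def fsc_def)
qed

lemma fbil_supp: "{x. fbil b c f h x \<noteq> 0} \<subseteq> (\<lambda>(p,q). b p q) ` ({p. f p \<noteq> 0} \<times> {q. h q \<noteq> 0})"
proof
  fix x assume "x \<in> {x. fbil b c f h x \<noteq> 0}"
  then have "(\<Sum>p\<in>{p. f p \<noteq> 0}. \<Sum>q\<in>{q. h q \<noteq> 0}. if b p q = x then f p * h q * c p q else 0) \<noteq> 0"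
    by (simp add: fbil_def)
  then obtain p where p: "f p \<noteq> 0" "(\<Sum>q\<in>{q. h q \<noteq> 0}. if b p q = x then f p * h q * c p q else 0) \<noteq> 0"
    by (rule sum.not_neutral_contains_not_neutral) auto
  from p(2) obtain q where "h q \<noteq> 0" "(if b p q = x then f p * h q * c p q else 0) \<noteq> 0"
    by (rule sum.not_neutral_contains_not_neutral) auto
  then have "h q \<noteq> 0" "b p q = x" by (auto split: if_splits)
  then show "x \<in> (\<lambda>(p,q). b p q) ` ({p. f p \<noteq> 0} \<times> {q. h q \<noteq> 0})" using p
    by (intro image_eqI[where x="(p,q)"]) auto
qed

lemma fin_fbil: "fin f \<Longrightarrow> fin h \<Longrightarrow> fin (fbil b c f h)"
  unfolding fin_def by (rule finite_subset[OF fbil_supp], intro finite_imageI finite_SigmaI)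

lemma fvs_fbil:
  assumes "f \<in> fvs G" "h \<in> fvs G" "\<And>p q. p \<in> G \<Longrightarrow> q \<in> G \<Longrightarrow> b p q \<in> G"
  shows "fbil b c f h \<in> fvs G"
proof -
  have "fin (fbil b c f h)" using fin_fbil fvs_fin assms by blast
  moreover have "y \<in> G" if "fbil b c f h y \<noteq> 0" for y
  proof -
    have "y \<in> (\<lambda>(p,q). b p q) ` ({p. f p \<noteq> 0} \<times> {q. h q \<noteq> 0})" using fbil_supp[of b c f h] that by blast
    then obtain p q where "f p \<noteq> 0" "h q \<noteq> 0" "y = b p q" by auto
    then show ?thesis using assms unfolding fvs_def by auto
  qed
  ultimately show ?thesis unfolding fvs_def fin_def by auto
qed

lemma fproj_fadd: "fproj dg b (fadd f g) = fadd (fproj dg b f) (fproj dg b g)"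
  unfolding fproj_def fadd_def by auto
lemma fproj_fsc: "fproj dg b (fsc c f) = fsc c (fproj dg b f)"
  unfolding fproj_def fsc_def by auto
lemma fproj_fzero: "fproj dg b fzero = fzero"
  unfolding fproj_def fzero_def by auto
lemma fproj_dl: "fproj dg b (dl p) = (if dg p = b then dl p else fzero)"
  unfolding fproj_def dl_def fzero_def by auto

definition lin_closed :: "('g \<Rightarrow> 'k::field) set \<Rightarrow> bool" where
  "lin_closed K \<longleftrightarrow> fzero \<in> K \<and> (\<forall>x\<in>K. \<forall>y\<in>K. fadd x y \<in> K) \<and> (\<forall>c. \<forall>x\<in>K. fsc c x \<in> K)"

definition cong_mod :: "('g \<Rightarrow> 'k::field) set \<Rightarrow> ('g \<Rightarrow> 'k) \<Rightarrow> ('g \<Rightarrow> 'k) \<Rightarrow> bool" where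
  "cong_mod K f g \<longleftrightarrow> fminus f g \<in> K"

lemma fminus_self: "fminus f f = fzero" unfolding fminus_def fadd_def fsc_def fzero_def by simp
lemma fminus_swap: "fminus g f = fsc (-1) (fminus f g)"
  unfolding fminus_def fadd_def fsc_def by (auto simp: algebra_simps)
lemma fminus_trans: "fminus f h = fadd (fminus f g) (fminus g h)"
  unfolding fminus_def fadd_def fsc_def by (auto simp: algebra_simps)
lemma fminus_add: "fminus (fadd f f') (fadd g g') = fadd (fminus f g) (fminus f' g')"
  unfolding fminus_def fadd_def fsc_def by (auto simp: algebra_simps)
lemma fminus_sc: "fminus (fsc c f) (fsc c g) = fsc c (fminus f g)"
  unfolding fminus_def fadd_def fsc_def by (auto simp: algebra_simps)
lemma fminus_rec: "f = fadd (fminus f g) g"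
  unfolding fminus_def fadd_def fsc_def by (auto simp: algebra_simps)

lemma lin_closed_zero: "lin_closed K \<Longrightarrow> fzero \<in> K" unfolding lin_closed_def by auto
lemma lin_closed_add: "lin_closed K \<Longrightarrow> x \<in> K \<Longrightarrow> y \<in> K \<Longrightarrow> fadd x y \<in> K"
  unfolding lin_closed_def by auto
lemma lin_closed_sc: "lin_closed K \<Longrightarrow> x \<in> K \<Longrightarrow> fsc c x \<in> K"
  unfolding lin_closed_def by auto
lemma lin_closed_minus: "lin_closed K \<Longrightarrow> x \<in> K \<Longrightarrow> y \<in> K \<Longrightarrow> fminus x y \<in> K"
  unfolding fminus_def by (simp add: lin_closed_add lin_closed_sc)

lemma cong_mod_refl: "lin_closed K \<Longrightarrow> cong_mod K f f"
  unfolding cong_mod_def fminus_self by (rule lin_closed_zero)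
lemma cong_mod_sym: "lin_closed K \<Longrightarrow> cong_mod K f g \<Longrightarrow> cong_mod K g f"
  unfolding cong_mod_def
  by (subst fminus_swap) (rule lin_closed_sc)
lemma cong_mod_trans: "lin_closed K \<Longrightarrow> cong_mod K f g \<Longrightarrow> cong_mod K g h \<Longrightarrow> cong_mod K f h"
  unfolding cong_mod_def
  by (subst fminus_trans[of _ _ g]) (rule lin_closed_add)
lemma cong_mod_add: "lin_closed K \<Longrightarrow> cong_mod K f g \<Longrightarrow> cong_mod K f' g' \<Longrightarrow> cong_mod K (fadd f f') (fadd g g')"
  unfolding cong_mod_def
  by (subst fminus_add) (rule lin_closed_add)
lemma cong_mod_sc: "lin_closed K \<Longrightarrow> cong_mod K f g \<Longrightarrow> cong_mod K (fsc c f) (fsc c g)"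
  unfolding cong_mod_def
  by (subst fminus_sc) (rule lin_closed_sc)
lemma cong_mod_mem: "lin_closed K \<Longrightarrow> cong_mod K f g \<Longrightarrow> g \<in> K \<Longrightarrow> f \<in> K"
  unfolding cong_mod_def
  by (subst fminus_rec[of f g]) (rule lin_closed_add)
lemma cong_mod_zero: "lin_closed K \<Longrightarrow> f \<in> K \<Longrightarrow> cong_mod K f fzero"
  unfolding cong_mod_def by (simp add: fminus_def fadd_def fsc_def fzero_def)

lemma coset_cong_mod: assumes "lin_closed K" "cong_mod K f g" shows "coset K f = coset K g"
proof -
  have *: "coset K f \<subseteq> coset K g" if "cong_mod K f g" for f g
  proof
    fix x assume "x \<in> coset K f"
    then obtain k where k: "k \<in> K" "x = fadd f k" unfolding coset_def by auto
    have "x = fadd g (fadd (fminus f g) k)" unfolding k(2) fadd_def fminus_def fsc_def by auto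
    moreover have "fadd (fminus f g) k \<in> K" using that k assms(1) unfolding cong_mod_def by (simp add: lin_closed_add)
    ultimately show "x \<in> coset K g" unfolding coset_def by auto
  qed
  show ?thesis using *[OF assms(2)] *[OF cong_mod_sym[OF assms]] by auto
qed

lemma self_in_coset: "lin_closed K \<Longrightarrow> f \<in> coset K f"
  unfolding coset_def using lin_closed_zero[of K] by (auto intro!: exI[of _ fzero] simp: fadd_def fzero_def)

lemma cong_mod_of_coset_eq: assumes "lin_closed K" "coset K f = coset K g" shows "cong_mod K f g"
proof -
  have "f \<in> coset K g" using self_in_coset[OF assms(1)] assms(2) by auto
  then obtain k where "k \<in> K" "f = fadd g k" unfolding coset_def by auto
  moreover have "fminus (fadd g k) g = k" unfolding fminus_def fadd_def fsc_def by auto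
  ultimately show ?thesis unfolding cong_mod_def by simp
qed

lemma rep_coset_cong_mod: assumes "lin_closed K" shows "cong_mod K (rep (coset K f)) f"
proof -
  have "rep (coset K f) \<in> coset K f" unfolding rep_def using self_in_coset[OF assms, of f] by (rule someI[of "\<lambda>x. x \<in> coset K f"])
  then obtain k where "k \<in> K" "rep (coset K f) = fadd f k" unfolding coset_def by auto
  moreover have "fminus (fadd f k) f = k" unfolding fminus_def fadd_def fsc_def by auto
  ultimately show ?thesis unfolding cong_mod_def by simp
qed

lemma rep_fvs:
  assumes "lin_closed K" "K \<subseteq> fvs G" "f \<in> fvs G"
  shows "rep (coset K f) \<in> fvs G"
proof -
  have "rep (coset K f) \<in> coset K f" unfolding rep_def using self_in_coset[OF assms(1), of f] by (rule someI[of "\<lambda>x. x \<in> coset K f"])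
  then obtain k where "k \<in> K" "rep (coset K f) = fadd f k" unfolding coset_def by auto
  then show ?thesis using assms by (auto intro!: fvs_fadd)
qed

lemma coset_rep: assumes "lin_closed K" shows "coset K (rep (coset K f)) = coset K f"
  using coset_cong_mod[OF assms rep_coset_cong_mod[OF assms]] .
lemma fmap_comp:
  assumes "f \<in> fvs G"
  shows "fmap g (\<lambda>_. 1) (fmap h (\<lambda>_. 1) f) = fmap (g \<circ> h) (\<lambda>_. 1) f"
  using assms
  by (induction rule: fvs_induct) (simp_all add: fmap_fzero fmap_dl fmap_fsc fmap_fadd fvs_fin fin_fmap fin_dl fsc_one)

lemma fmap_id_on:
  assumes "f \<in> fvs G" and "\<And>p. p \<in> G \<Longrightarrow> g p = p"
  shows "fmap g (\<lambda>_. 1) f = f"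
  using assms(1)
  by (induction rule: fvs_induct) (simp_all add: fmap_fzero fmap_dl fmap_fsc fmap_fadd fvs_fin fin_dl fsc_one assms(2))

lemma fmap_lin_closed:
  assumes K: "lin_closed K" and "f \<in> fvs G" and "\<And>p. p \<in> G \<Longrightarrow> dl (g p) \<in> K"
  shows "fmap g c f \<in> K"
  using assms(2)
proof (induction rule: fvs_induct)
  case zero then show ?case by (simp add: fmap_fzero lin_closed_zero[OF K])
next
  case (gen d p) then show ?case by (simp add: fmap_fsc fin_dl fmap_dl lin_closed_sc[OF K] assms(3))
next
  case (add f h) then show ?case by (simp add: fmap_fadd fvs_fin lin_closed_add[OF K])
qed

lemma fmap_fadd_cong_mod:
  assumes K: "lin_closed K" and "f \<in> fvs G"
    and split: "\<And>p. p \<in> G \<Longrightarrow> cong_mod K (fadd (dl (g p)) (dl (h p))) (dl p)"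
  shows "cong_mod K (fadd (fmap g (\<lambda>_. 1) f) (fmap h (\<lambda>_. 1) f)) f"
  using assms(2)
proof (induction rule: fvs_induct)
  case zero then show ?case by (simp add: fmap_fzero fadd_fzero cong_mod_refl[OF K])
next
  case (gen d p)
  have "cong_mod K (fsc d (fadd (dl (g p)) (dl (h p)))) (fsc d (dl p))"
    by (rule cong_mod_sc[OF K split[OF gen]])
  moreover have "fsc d (fadd (dl (g p)) (dl (h p))) = fadd (fsc d (dl (g p))) (fsc d (dl (h p)))"
    by (simp add: fsc_def fadd_def distrib_left)
  ultimately show ?case by (simp add: fmap_fsc fin_dl fmap_dl fsc_one)
next
  case (add f f')
  have "cong_mod K (fadd (fadd (fmap g (\<lambda>_. 1) f) (fmap h (\<lambda>_. 1) f))
      (fadd (fmap g (\<lambda>_. 1) f') (fmap h (\<lambda>_. 1) f'))) (fadd f f')"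
    by (rule cong_mod_add[OF K add.IH])
  then show ?case
    using add.hyps by (simp add: fmap_fadd fvs_fin) (simp add: fadd_def algebra_simps)
qed

context
  fixes M :: "('m, 'k::field) lsa" and N :: "('n, 'k) lsa"
    and aMN :: "'m \<Rightarrow> 'n \<Rightarrow> 'n" and aNM :: "'n \<Rightarrow> 'm \<Rightarrow> 'm"
begin

lemma tker_lin_closed: "lin_closed (tker M N aMN aNM)"
  unfolding lin_closed_def tker_def tgood_def by (intro conjI ballI allI InterI; simp)

lemma tker_zero: "fzero \<in> tker M N aMN aNM"
  using tker_lin_closed unfolding lin_closed_def by blast

lemma tker_fproj: "x \<in> tker M N aMN aNM \<Longrightarrow> fproj tdeg b x \<in> tker M N aMN aNM"
  unfolding tker_def tgood_def by (intro InterI; simp)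

lemma tker_trels: "r \<in> trels M N aMN aNM \<Longrightarrow> r \<in> tker M N aMN aNM"
  unfolding tker_def tgood_def by (intro InterI; simp add: subset_iff)

lemma tker_tbr: assumes "f \<in> fvs (tgens M N)" "k \<in> tker M N aMN aNM"
  shows "tbr aMN aNM f k \<in> tker M N aMN aNM" "tbr aMN aNM k f \<in> tker M N aMN aNM"
  using assms unfolding tker_def tgood_def by (auto 0 0)

lemma tker_anti: assumes "f \<in> fvs_gr (tgens M N) tdeg a" "g \<in> fvs_gr (tgens M N) tdeg b"
  shows "fadd (tbr aMN aNM f g) (fsc (sg (a \<and> b)) (tbr aMN aNM g f)) \<in> tker M N aMN aNM"
  using assms unfolding tker_def tgood_def by (intro InterI; simp)

lemma tker_jacobi:
  assumes "f \<in> fvs_gr (tgens M N) tdeg a" "g \<in> fvs_gr (tgens M N) tdeg b" "h \<in> fvs (tgens M N)"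
  shows "fminus (tbr aMN aNM f (tbr aMN aNM g h))
           (fadd (tbr aMN aNM (tbr aMN aNM f g) h)
                 (fsc (sg (a \<and> b)) (tbr aMN aNM g (tbr aMN aNM f h)))) \<in> tker M N aMN aNM"
  using assms unfolding tker_def tgood_def by (intro InterI; simp)

lemma tker_subset: "tgood M N aMN aNM (fvs (tgens M N)) \<Longrightarrow> tker M N aMN aNM \<subseteq> fvs (tgens M N)"
  unfolding tker_def by blast

lemma trels_sc_left: "m \<in> gr M i \<Longrightarrow> n \<in> gr N j \<Longrightarrow>
  fminus (fsc c (dl (m, n, i, j))) (dl (sc M c m, n, i, j)) \<in> trels M N aMN aNM"
  unfolding trels_def by (rule UnI1, rule UnI1, rule UnI1, rule UnI1, rule UnI1) blast
lemma trels_sc_right: "m \<in> gr M i \<Longrightarrow> n \<in> gr N j \<Longrightarrow>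
  fminus (fsc c (dl (m, n, i, j))) (dl (m, sc N c n, i, j)) \<in> trels M N aMN aNM"
  unfolding trels_def by (rule UnI1, rule UnI1, rule UnI1, rule UnI1, rule UnI2) blast
lemma trels_add_left: "m \<in> gr M i \<Longrightarrow> m' \<in> gr M i \<Longrightarrow> n \<in> gr N j \<Longrightarrow>
  fminus (dl (ad M m m', n, i, j)) (fadd (dl (m, n, i, j)) (dl (m', n, i, j))) \<in> trels M N aMN aNM"
  unfolding trels_def by (rule UnI1, rule UnI1, rule UnI1, rule UnI2) blast
lemma trels_add_right: "m \<in> gr M i \<Longrightarrow> n \<in> gr N j \<Longrightarrow> n' \<in> gr N j \<Longrightarrow>
  fminus (dl (m, ad N n n', i, j)) (fadd (dl (m, n, i, j)) (dl (m, n', i, j))) \<in> trels M N aMN aNM"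
  unfolding trels_def by (rule UnI1, rule UnI1, rule UnI2) blast
lemma trels_br_left: "m \<in> gr M i \<Longrightarrow> m' \<in> gr M i' \<Longrightarrow> n \<in> gr N j \<Longrightarrow>
  fadd (fminus (dl (br M m m', n, i \<noteq> i', j)) (dl (m, aMN m' n, i, i' \<noteq> j)))
            (fsc (sg (i \<and> i')) (dl (m', aMN m n, i', i \<noteq> j))) \<in> trels M N aMN aNM"
  unfolding trels_def by (rule UnI1, rule UnI2) blast
lemma trels_br_right: "m \<in> gr M i \<Longrightarrow> n \<in> gr N j \<Longrightarrow> n' \<in> gr N j' \<Longrightarrow>
  fadd (fminus (dl (m, br N n n', i, j \<noteq> j'))
                    (fsc (sg (j' \<and> (i \<noteq> j))) (dl (aNM n' m, n, i \<noteq> j', j))))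
            (fsc (sg (i \<and> j)) (dl (aNM n m, n', i \<noteq> j, j'))) \<in> trels M N aMN aNM"
  unfolding trels_def by (rule UnI2) blast

lemma trels_cases:
  assumes "r \<in> trels M N aMN aNM"
  obtains (R1) c m n i j where "m \<in> gr M i" "n \<in> gr N j" "r = fminus (fsc c (dl (m, n, i, j))) (dl (sc M c m, n, i, j))"
  | (R2) c m n i j where "m \<in> gr M i" "n \<in> gr N j" "r = fminus (fsc c (dl (m, n, i, j))) (dl (m, sc N c n, i, j))"
  | (R3) m m' n i j where "m \<in> gr M i" "m' \<in> gr M i" "n \<in> gr N j"
      "r = fminus (dl (ad M m m', n, i, j)) (fadd (dl (m, n, i, j)) (dl (m', n, i, j)))"
  | (R4) m n n' i j where "m \<in> gr M i" "n \<in> gr N j" "n' \<in> gr N j"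
      "r = fminus (dl (m, ad N n n', i, j)) (fadd (dl (m, n, i, j)) (dl (m, n', i, j)))"
  | (R5) m m' n i i' j where "m \<in> gr M i" "m' \<in> gr M i'" "n \<in> gr N j"
      "r = fadd (fminus (dl (br M m m', n, i \<noteq> i', j)) (dl (m, aMN m' n, i, i' \<noteq> j)))
            (fsc (sg (i \<and> i')) (dl (m', aMN m n, i', i \<noteq> j)))"
  | (R6) m n n' i j j' where "m \<in> gr M i" "n \<in> gr N j" "n' \<in> gr N j'"
      "r = fadd (fminus (dl (m, br N n n', i, j \<noteq> j'))
                    (fsc (sg (j' \<and> (i \<noteq> j))) (dl (aNM n' m, n, i \<noteq> j', j))))
            (fsc (sg (i \<and> j)) (dl (aNM n m, n', i \<noteq> j, j')))"
  using assms unfolding trels_def by (elim UnE; (elim CollectE exE conjE)?) blast+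

end

lemma fin_tbr: "fin f \<Longrightarrow> fin h \<Longrightarrow> fin (tbr a b f h)"
  unfolding tbr_def by (rule fin_fbil)
lemma tbr_fadd1: "fin f \<Longrightarrow> fin f' \<Longrightarrow> fin h \<Longrightarrow> tbr a b (fadd f f') h = fadd (tbr a b f h) (tbr a b f' h)"
  unfolding tbr_def by (rule fbil_fadd1)
lemma tbr_fadd2: "fin f \<Longrightarrow> fin h \<Longrightarrow> fin h' \<Longrightarrow> tbr a b f (fadd h h') = fadd (tbr a b f h) (tbr a b f h')"
  unfolding tbr_def by (rule fbil_fadd2)
lemma tbr_fsc1: "fin f \<Longrightarrow> fin h \<Longrightarrow> tbr a b (fsc d f) h = fsc d (tbr a b f h)"
  unfolding tbr_def by (rule fbil_fsc1)
lemma tbr_fsc2: "fin f \<Longrightarrow> fin h \<Longrightarrow> tbr a b f (fsc d h) = fsc d (tbr a b f h)"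
  unfolding tbr_def by (rule fbil_fsc2)
lemma tbr_fzero1: "tbr a b fzero h = fzero" unfolding tbr_def by (rule fbil_fzero1)
lemma tbr_fzero2: "tbr a b f fzero = fzero" unfolding tbr_def by (rule fbil_fzero2)
lemma tbr_fminus1: "fin f \<Longrightarrow> fin f' \<Longrightarrow> fin h \<Longrightarrow> tbr a b (fminus f f') h = fminus (tbr a b f h) (tbr a b f' h)"
  unfolding fminus_def by (simp add: tbr_fadd1 tbr_fsc1 fin_fsc)
lemma tbr_fminus2: "fin f \<Longrightarrow> fin h \<Longrightarrow> fin h' \<Longrightarrow> tbr a b f (fminus h h') = fminus (tbr a b f h) (tbr a b f h')"
  unfolding fminus_def by (simp add: tbr_fadd2 tbr_fsc2 fin_fsc)
lemma tbr_dl: "tbr aMN aNM (dl (m, n, i, j)) (dl (m', n', i', j')) =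
   fsc (- sg (i \<and> j)) (dl (aNM n m, aMN m' n', i \<noteq> j, i' \<noteq> j'))"
  unfolding tbr_def fbil_dl by (simp add: tgb_def tgc_def)

lemma fin_fproj: "fin f \<Longrightarrow> fin (fproj dg b f)"
  unfolding fin_def fproj_def by (auto elim: finite_subset[rotated])

definition gr_closed :: "('a, 'k::field) lsa \<Rightarrow> bool" where
  "gr_closed A \<longleftrightarrow> (\<forall>b c x. x \<in> gr A b \<longrightarrow> sc A c x \<in> gr A b)
     \<and> (\<forall>b x y. x \<in> gr A b \<longrightarrow> y \<in> gr A b \<longrightarrow> ad A x y \<in> gr A b)
     \<and> (\<forall>i j x y. x \<in> gr A i \<longrightarrow> y \<in> gr A j \<longrightarrow> br A x y \<in> gr A (i \<noteq> j))"

definition graded_act :: "('p, 'k::field) lsa \<Rightarrow> ('m, 'k) lsa \<Rightarrow> ('p \<Rightarrow> 'm \<Rightarrow> 'm) \<Rightarrow> bool" where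
  "graded_act P M a \<longleftrightarrow> (\<forall>i j. \<forall>p\<in>gr P i. \<forall>m\<in>gr M j. a p m \<in> gr M (i \<noteq> j))"

lemma lsa_gr_closed:
  assumes "lie_superalgebra A"
  shows "gr_closed A"
proof -
  have "\<forall>b. subspace A (gr A b)"
    using assms unfolding lie_superalgebra_def graded_def by (elim conjE) assumption
  moreover have "\<forall>i j. \<forall>x\<in>gr A i. \<forall>y\<in>gr A j. br A x y \<in> gr A (i \<noteq> j)"
    using assms unfolding lie_superalgebra_def by (elim conjE) assumption
  ultimately show ?thesis unfolding gr_closed_def subspace_def by blast
qed

lemma action_graded: "is_action P M a \<Longrightarrow> graded_act P M a"
  unfolding is_action_def graded_act_def by (elim conjE) assumption

lemma tgens_iff[simp]: "(m, n, i, j) \<in> tgens M N \<longleftrightarrow> m \<in> gr M i \<and> n \<in> gr N j"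
  unfolding tgens_def by auto

lemma gr_closed_sc: "gr_closed A \<Longrightarrow> x \<in> gr A b \<Longrightarrow> sc A c x \<in> gr A b"
  unfolding gr_closed_def by blast
lemma gr_closed_ad: "gr_closed A \<Longrightarrow> x \<in> gr A b \<Longrightarrow> y \<in> gr A b \<Longrightarrow> ad A x y \<in> gr A b"
  unfolding gr_closed_def by blast
lemma gr_closed_br: "gr_closed A \<Longrightarrow> x \<in> gr A i \<Longrightarrow> y \<in> gr A j \<Longrightarrow> br A x y \<in> gr A (i \<noteq> j)"
  unfolding gr_closed_def by blast
lemma graded_actD: "graded_act P M a \<Longrightarrow> p \<in> gr P i \<Longrightarrow> m \<in> gr M j \<Longrightarrow> a p m \<in> gr M (i \<noteq> j)"
  unfolding graded_act_def by blast

lemma tgb_tgens: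
  assumes "graded_act M N aMN" "graded_act N M aNM" "p \<in> tgens M N" "q \<in> tgens M N"
  shows "tgb aMN aNM p q \<in> tgens M N"
proof -
  obtain m n i j m' n' i' j' where p: "p = (m, n, i, j)" "m \<in> gr M i" "n \<in> gr N j"
    and q: "q = (m', n', i', j')" "m' \<in> gr M i'" "n' \<in> gr N j'"
    using assms(3,4) unfolding tgens_def by auto
  have "aNM n m \<in> gr M (i \<noteq> j)"
    using graded_actD[OF assms(2) p(3,2)] by (simp add: eq_commute)
  then show ?thesis using graded_actD[OF assms(1) q(2,3)] p q by (simp add: tgb_def)
qed

lemma fvs_tbr:
  "graded_act M N aMN \<Longrightarrow> graded_act N M aNM \<Longrightarrow> f \<in> fvs (tgens M N) \<Longrightarrow> h \<in> fvs (tgens M N) \<Longrightarrow>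
    tbr aMN aNM f h \<in> fvs (tgens M N)"
  unfolding tbr_def by (rule fvs_fbil) (auto intro: tgb_tgens)

lemma trels_fvs:
  assumes gM: "gr_closed M" and gN: "gr_closed N"
    and aMN: "graded_act M N aMN" and aNM: "graded_act N M aNM"
  shows "trels M N aMN aNM \<subseteq> fvs (tgens M N)"
proof
  note fvs = fvs_fminus fvs_fadd fvs_fsc fvs_dl
  fix r assume "r \<in> trels M N aMN aNM"
  then show "r \<in> fvs (tgens M N)"
  proof (cases rule: trels_cases)
    case (R1 c m n i j)
    then show ?thesis using gr_closed_sc[OF gM R1(1)] by (simp add: fvs)
  next
    case (R2 c m n i j)
    then show ?thesis using gr_closed_sc[OF gN R2(2)] by (simp add: fvs)
  next
    case (R3 m m' n i j)
    then show ?thesis using gr_closed_ad[OF gM R3(1,2)] by (simp add: fvs)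
  next
    case (R4 m n n' i j)
    then show ?thesis using gr_closed_ad[OF gN R4(2,3)] by (simp add: fvs)
  next
    case (R5 m m' n i i' j)
    then show ?thesis
      using gr_closed_br[OF gM R5(1,2)] graded_actD[OF aMN R5(2,3)] graded_actD[OF aMN R5(1,3)]
      by (simp add: fvs)
  next
    case (R6 m n n' i j j')
    have "aNM n' m \<in> gr M (i \<noteq> j')" "aNM n m \<in> gr M (i \<noteq> j)"
      using graded_actD[OF aNM R6(3,1)] graded_actD[OF aNM R6(2,1)] by (simp_all add: eq_commute)
    then show ?thesis using R6 gr_closed_br[OF gN R6(2,3)] by (simp add: fvs)
  qed
qed

lemma tgood_fvs:
  fixes M :: "('m, 'k::field) lsa" and N :: "('n, 'k) lsa"
  assumes "gr_closed M" "gr_closed N" and a1: "graded_act M N aMN" and a2: "graded_act N M aNM"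
  shows "tgood M N aMN aNM (fvs (tgens M N))"
  unfolding tgood_def using trels_fvs[OF assms] fvs_gr_sub[THEN subsetD]
  by (auto intro!: fvs_fadd fvs_fsc fvs_fminus fvs_fproj fvs_fzero fvs_tbr[OF a1 a2])

lemmas fins[simp] = fin_dl fin_fsc fin_tbr fin_fmap fin_fadd fin_fminus fin_fzero fin_fproj

lemma tgood_tbr:
  fixes M :: "('m, 'k::field) lsa" and N :: "('n, 'k) lsa" and f h :: "'m \<times> 'n \<times> bool \<times> bool \<Rightarrow> 'k"
  assumes "tgood M N a b (fvs (tgens M N))" "f \<in> fvs (tgens M N)" "h \<in> fvs (tgens M N)"
  shows "tbr a b f h \<in> fvs (tgens M N)"
  using assms unfolding tgood_def by (auto 0 0)

lemma tgood_rels: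
  fixes M :: "('m, 'k::field) lsa" and N :: "('n, 'k) lsa"
  shows "tgood M N a b (fvs (tgens M N)) \<Longrightarrow> trels M N a b \<subseteq> fvs (tgens M N)"
  unfolding tgood_def by (elim conjE)

section \<open>Homomorphisms between tensor products\<close>

locale tensor_map =
  fixes M1 :: "('m1, 'k::field) lsa" and N1 :: "('n1, 'k) lsa"
    and a1 :: "'m1 \<Rightarrow> 'n1 \<Rightarrow> 'n1" and b1 :: "'n1 \<Rightarrow> 'm1 \<Rightarrow> 'm1"
    and M2 :: "('m2, 'k) lsa" and N2 :: "('n2, 'k) lsa"
    and a2 :: "'m2 \<Rightarrow> 'n2 \<Rightarrow> 'n2" and b2 :: "'n2 \<Rightarrow> 'm2 \<Rightarrow> 'm2"
    and g :: "'m1 \<times> 'n1 \<times> bool \<times> bool \<Rightarrow> 'm2 \<times> 'n2 \<times> bool \<times> bool"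
    and c :: "'m1 \<times> 'n1 \<times> bool \<times> bool \<Rightarrow> 'k"
  assumes good1: "tgood M1 N1 a1 b1 (fvs (tgens M1 N1))"
    and good2: "tgood M2 N2 a2 b2 (fvs (tgens M2 N2))"
    and gens_map: "\<And>p. p \<in> tgens M1 N1 \<Longrightarrow> g p \<in> tgens M2 N2"
    and gens_deg: "\<And>p. p \<in> tgens M1 N1 \<Longrightarrow> tdeg (g p) = tdeg p"
    and trels_compat: "\<And>r. r \<in> trels M1 N1 a1 b1 \<Longrightarrow> fmap g c r \<in> tker M2 N2 a2 b2"
    and tbr_compat: "\<And>p q. p \<in> tgens M1 N1 \<Longrightarrow> q \<in> tgens M1 N1 \<Longrightarrow> cong_mod (tker M2 N2 a2 b2)
        (fmap g c (tbr a1 b1 (dl p) (dl q))) (tbr a2 b2 (fmap g c (dl p)) (fmap g c (dl q)))"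
begin

abbreviation "G1 \<equiv> tgens M1 N1"
abbreviation "G2 \<equiv> tgens M2 N2"
abbreviation "K1 \<equiv> tker M1 N1 a1 b1"
abbreviation "K2 \<equiv> tker M2 N2 a2 b2"
abbreviation "lift \<equiv> fmap g c"

lemma lin_closed_K2: "lin_closed K2" by (rule tker_lin_closed)
lemma lin_closed_K1: "lin_closed K1" by (rule tker_lin_closed)
lemma fvs_tbr1:
  fixes f h :: "'m1 \<times> 'n1 \<times> bool \<times> bool \<Rightarrow> 'k"
  shows "f \<in> fvs G1 \<Longrightarrow> h \<in> fvs G1 \<Longrightarrow> tbr a1 b1 f h \<in> fvs G1"
  using tgood_tbr[OF good1] .
lemma fvs_tbr2:
  fixes f h :: "'m2 \<times> 'n2 \<times> bool \<times> bool \<Rightarrow> 'k"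
  shows "f \<in> fvs G2 \<Longrightarrow> h \<in> fvs G2 \<Longrightarrow> tbr a2 b2 f h \<in> fvs G2"
  using tgood_tbr[OF good2] .
lemma K1_fvs: "K1 \<subseteq> fvs G1" using tker_subset[OF good1] .
lemma K2_fvs: "K2 \<subseteq> fvs G2" using tker_subset[OF good2] .
lemma lift_fvs: "f \<in> fvs G1 \<Longrightarrow> lift f \<in> fvs G2"
  by (rule fvs_fmap) (use gens_map in auto)
lemma lift_gr: "f \<in> fvs_gr G1 tdeg b \<Longrightarrow> lift f \<in> fvs_gr G2 tdeg b"
  by (rule fvs_gr_fmap[of f G1 tdeg b g G2 tdeg c]) (use gens_map gens_deg in auto)

lemma lift_fproj: assumes "f \<in> fvs G1" shows "lift (fproj tdeg b f) = fproj tdeg b (lift f)"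
  using assms
proof (induction rule: fvs_induct)
  case zero then show ?case by (simp add: fproj_fzero fmap_fzero)
next
  case (gen d p)
  then show ?case by (cases "tdeg p = b") (simp_all add: fproj_fsc fmap_fsc fproj_dl fmap_dl gens_deg fmap_fzero fsc_fzero)
next
  case (add f h)
  then show ?case by (simp add: fproj_fadd fmap_fadd fvs_fin)
qed

lemma tbr_cong_right:
  fixes x y z :: "'m2 \<times> 'n2 \<times> bool \<times> bool \<Rightarrow> 'k"
  assumes "z \<in> fvs G2" "x \<in> fvs G2" "y \<in> fvs G2" "cong_mod K2 x y"
  shows "cong_mod K2 (tbr a2 b2 z x) (tbr a2 b2 z y)"
proof -
  have "fminus (tbr a2 b2 z x) (tbr a2 b2 z y) = tbr a2 b2 z (fminus x y)"
    using assms by (simp add: tbr_fminus2 fvs_fin)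
  moreover have "tbr a2 b2 z (fminus x y) \<in> K2" using assms(1,4) unfolding cong_mod_def by (rule tker_tbr(1))
  ultimately show ?thesis unfolding cong_mod_def by simp
qed

lemma tbr_cong_left:
  fixes x y z :: "'m2 \<times> 'n2 \<times> bool \<times> bool \<Rightarrow> 'k"
  assumes "z \<in> fvs G2" "x \<in> fvs G2" "y \<in> fvs G2" "cong_mod K2 x y"
  shows "cong_mod K2 (tbr a2 b2 x z) (tbr a2 b2 y z)"
proof -
  have "fminus (tbr a2 b2 x z) (tbr a2 b2 y z) = tbr a2 b2 (fminus x y) z"
    using assms by (simp add: tbr_fminus1 fvs_fin)
  moreover have "tbr a2 b2 (fminus x y) z \<in> K2" using assms(1,4) unfolding cong_mod_def by (rule tker_tbr(2))
  ultimately show ?thesis unfolding cong_mod_def by simp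
qed

lemma lift_tbr_gen: assumes "q \<in> G1" "f \<in> fvs G1"
  shows "cong_mod K2 (lift (tbr a1 b1 f (dl q))) (tbr a2 b2 (lift f) (lift (dl q)))"
  using assms(2)
proof (induction rule: fvs_induct)
  case zero then show ?case by (simp add: tbr_fzero1 fmap_fzero cong_mod_refl[OF lin_closed_K2])
next
  case (gen d p)
  have "cong_mod K2 (fsc d (lift (tbr a1 b1 (dl p) (dl q)))) (fsc d (tbr a2 b2 (lift (dl p)) (lift (dl q))))"
    by (rule cong_mod_sc[OF lin_closed_K2 tbr_compat[OF gen assms(1)]])
  then show ?case by (simp add: tbr_fsc1 fmap_fsc)
next
  case (add f h)
  have "cong_mod K2 (fadd (lift (tbr a1 b1 f (dl q))) (lift (tbr a1 b1 h (dl q))))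
              (fadd (tbr a2 b2 (lift f) (lift (dl q))) (tbr a2 b2 (lift h) (lift (dl q))))"
    by (rule cong_mod_add[OF lin_closed_K2 add.IH])
  then show ?case using add.hyps by (simp add: tbr_fadd1 fmap_fadd fvs_fin)
qed

lemma lift_tbr: assumes "f \<in> fvs G1" "h \<in> fvs G1"
  shows "cong_mod K2 (lift (tbr a1 b1 f h)) (tbr a2 b2 (lift f) (lift h))"
  using assms(2)
proof (induction rule: fvs_induct)
  case zero then show ?case by (simp add: tbr_fzero2 fmap_fzero cong_mod_refl[OF lin_closed_K2])
next
  case (gen d p)
  have "cong_mod K2 (fsc d (lift (tbr a1 b1 f (dl p)))) (fsc d (tbr a2 b2 (lift f) (lift (dl p))))"
    by (rule cong_mod_sc[OF lin_closed_K2 lift_tbr_gen[OF gen assms(1)]])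
  then show ?case using assms(1) by (simp add: tbr_fsc2 fmap_fsc fvs_fin)
next
  case (add h1 h2)
  have "cong_mod K2 (fadd (lift (tbr a1 b1 f h1)) (lift (tbr a1 b1 f h2)))
              (fadd (tbr a2 b2 (lift f) (lift h1)) (tbr a2 b2 (lift f) (lift h2)))"
    by (rule cong_mod_add[OF lin_closed_K2 add.IH])
  then show ?case using add.hyps assms(1) by (simp add: tbr_fadd2 fmap_fadd fvs_fin)
qed

lemma lift_tbr2:
  assumes "x \<in> fvs G1" "y \<in> fvs G1" "z \<in> fvs G1"
  shows "cong_mod K2 (lift (tbr a1 b1 x (tbr a1 b1 y z))) (tbr a2 b2 (lift x) (tbr a2 b2 (lift y) (lift z)))"
proof (rule cong_mod_trans[OF lin_closed_K2 lift_tbr[OF assms(1) fvs_tbr1[OF assms(2,3)]]])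
  show "cong_mod K2 (tbr a2 b2 (lift x) (lift (tbr a1 b1 y z))) (tbr a2 b2 (lift x) (tbr a2 b2 (lift y) (lift z)))"
    by (rule tbr_cong_right) (use assms lift_tbr lift_fvs fvs_tbr1 fvs_tbr2 in auto)
qed

lemma lift_tbr1:
  assumes "x \<in> fvs G1" "y \<in> fvs G1" "z \<in> fvs G1"
  shows "cong_mod K2 (lift (tbr a1 b1 (tbr a1 b1 x y) z)) (tbr a2 b2 (tbr a2 b2 (lift x) (lift y)) (lift z))"
proof (rule cong_mod_trans[OF lin_closed_K2 lift_tbr[OF fvs_tbr1[OF assms(1,2)] assms(3)]])
  show "cong_mod K2 (tbr a2 b2 (lift (tbr a1 b1 x y)) (lift z)) (tbr a2 b2 (tbr a2 b2 (lift x) (lift y)) (lift z))"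
    by (rule tbr_cong_left) (use assms lift_tbr lift_fvs fvs_tbr1 fvs_tbr2 in auto)
qed

lemma lift_anti:
  assumes f: "f \<in> fvs_gr G1 tdeg a" and h: "h \<in> fvs_gr G1 tdeg b"
  shows "lift (fadd (tbr a1 b1 f h) (fsc (sg (a \<and> b)) (tbr a1 b1 h f))) \<in> K2"
proof (rule cong_mod_mem[OF lin_closed_K2 _ tker_anti[OF lift_gr[OF f] lift_gr[OF h]]])
  have "f \<in> fvs G1" "h \<in> fvs G1" using f h fvs_gr_sub by auto
  then show "cong_mod K2 (lift (fadd (tbr a1 b1 f h) (fsc (sg (a \<and> b)) (tbr a1 b1 h f))))
     (fadd (tbr a2 b2 (lift f) (lift h)) (fsc (sg (a \<and> b)) (tbr a2 b2 (lift h) (lift f))))"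
    by (simp add: fmap_fadd fmap_fsc fvs_fin cong_mod_add[OF lin_closed_K2] cong_mod_sc[OF lin_closed_K2] lift_tbr)
qed

lemma lift_jacobi:
  assumes f: "f \<in> fvs_gr G1 tdeg a" and g: "g' \<in> fvs_gr G1 tdeg b" and h: "h \<in> fvs G1"
  shows "lift (fminus (tbr a1 b1 f (tbr a1 b1 g' h))
           (fadd (tbr a1 b1 (tbr a1 b1 f g') h) (fsc (sg (a \<and> b)) (tbr a1 b1 g' (tbr a1 b1 f h))))) \<in> K2"
proof (rule cong_mod_mem[OF lin_closed_K2 _ tker_jacobi[OF lift_gr[OF f] lift_gr[OF g] lift_fvs[OF h]]])
  have "f \<in> fvs G1" "g' \<in> fvs G1" using f g fvs_gr_sub by auto
  then show "cong_mod K2 (lift (fminus (tbr a1 b1 f (tbr a1 b1 g' h))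
           (fadd (tbr a1 b1 (tbr a1 b1 f g') h) (fsc (sg (a \<and> b)) (tbr a1 b1 g' (tbr a1 b1 f h))))))
        (fminus (tbr a2 b2 (lift f) (tbr a2 b2 (lift g') (lift h)))
           (fadd (tbr a2 b2 (tbr a2 b2 (lift f) (lift g')) (lift h))
                 (fsc (sg (a \<and> b)) (tbr a2 b2 (lift g') (tbr a2 b2 (lift f) (lift h))))))"
    unfolding fminus_def using h lift_fvs
    by (simp add: fmap_fadd fmap_fsc fvs_fin cong_mod_add[OF lin_closed_K2] cong_mod_sc[OF lin_closed_K2]
        lift_tbr1 lift_tbr2)
qed

lemma tgood_lift_preimage: "tgood M1 N1 a1 b1 {f \<in> fvs G1. lift f \<in> K2}" (is "tgood _ _ _ _ ?P")
  unfolding tgood_def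
proof (intro conjI ballI allI)
  show "fzero \<in> ?P" by (simp add: fvs_fzero fmap_fzero tker_zero)
  show "trels M1 N1 a1 b1 \<subseteq> ?P" using tgood_rels[OF good1] trels_compat by auto
next
  fix x y assume "x \<in> ?P" "y \<in> ?P"
  then show "fadd x y \<in> ?P" by (auto simp: fvs_fadd fmap_fadd fvs_fin lin_closed_add[OF lin_closed_K2])
next
  fix d x assume "x \<in> ?P"
  then show "fsc d x \<in> ?P" by (auto simp: fvs_fsc fmap_fsc fvs_fin lin_closed_sc[OF lin_closed_K2])
next
  fix b x assume "x \<in> ?P"
  then show "fproj tdeg b x \<in> ?P" by (simp add: fvs_fproj lift_fproj tker_fproj)
next
  fix f k :: "'m1 \<times> 'n1 \<times> bool \<times> bool \<Rightarrow> 'k" assume f: "f \<in> fvs G1" and "k \<in> ?P"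
  then have k: "k \<in> fvs G1" "lift k \<in> K2" by auto
  show "tbr a1 b1 f k \<in> ?P"
    using cong_mod_mem[OF lin_closed_K2 lift_tbr[OF f k(1)] tker_tbr(1)[OF lift_fvs[OF f] k(2)]]
    by (simp add: fvs_tbr1[OF f k(1)])
  show "tbr a1 b1 k f \<in> ?P"
    using cong_mod_mem[OF lin_closed_K2 lift_tbr[OF k(1) f] tker_tbr(2)[OF lift_fvs[OF f] k(2)]]
    by (simp add: fvs_tbr1[OF k(1) f])
qed (use fvs_gr_sub lift_anti lift_jacobi in \<open>auto intro!: fvs_fadd fvs_fsc fvs_fminus fvs_tbr1\<close>)

lemma lift_tker: "f \<in> K1 \<Longrightarrow> lift f \<in> K2"
  using tgood_lift_preimage unfolding tker_def by blast

lemma lift_cong_mod: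
  assumes "x \<in> fvs G1" "y \<in> fvs G1" "cong_mod K1 x y"
  shows "cong_mod K2 (lift x) (lift y)"
  using lift_tker[of "fminus x y"] assms unfolding cong_mod_def by (simp add: fmap_fminus fvs_fin)

end

lemma tensor_simps:
  "car (tensor M N a b) = coset (tker M N a b) ` fvs (tgens M N)"
  "zr (tensor M N a b) = coset (tker M N a b) fzero"
  "ad (tensor M N a b) X Y = coset (tker M N a b) (fadd (rep X) (rep Y))"
  "sc (tensor M N a b) d X = coset (tker M N a b) (fsc d (rep X))"
  "br (tensor M N a b) X Y = coset (tker M N a b) (tbr a b (rep X) (rep Y))"
  "gr (tensor M N a b) i = coset (tker M N a b) ` fvs_gr (tgens M N) tdeg i"
  by (simp_all add: tensor_def)

definition quot_map ::
    "('g \<Rightarrow> 'h) \<Rightarrow> ('g \<Rightarrow> 'k::field) \<Rightarrow> ('h \<Rightarrow> 'k) set \<Rightarrow> ('g \<Rightarrow> 'k) set \<Rightarrow> ('h \<Rightarrow> 'k) set" where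
  "quot_map g c K Z = coset K (fmap g c (rep Z))"

context tensor_map
begin

abbreviation "T1 \<equiv> tensor M1 N1 a1 b1"
abbreviation "T2 \<equiv> tensor M2 N2 a2 b2"
abbreviation "induced \<equiv> quot_map g c K2"

lemma rep_car1: "Z \<in> car T1 \<Longrightarrow> rep Z \<in> fvs G1"
  by (auto simp: tensor_simps intro: rep_fvs[OF lin_closed_K1 K1_fvs])
lemma rep_car2: "Z \<in> car T2 \<Longrightarrow> rep Z \<in> fvs G2"
  by (auto simp: tensor_simps intro: rep_fvs[OF lin_closed_K2 K2_fvs])

lemma induced_coset: assumes "f \<in> fvs G1" shows "induced (coset K1 f) = coset K2 (lift f)"
proof -
  have r: "rep (coset K1 f) \<in> fvs G1" by (rule rep_fvs[OF lin_closed_K1 K1_fvs assms])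
  have "cong_mod K2 (lift (rep (coset K1 f))) (lift f)" by (rule lift_cong_mod[OF r assms rep_coset_cong_mod[OF lin_closed_K1]])
  then show ?thesis unfolding quot_map_def by (rule coset_cong_mod[OF lin_closed_K2])
qed

lemma rep_cong_K2: "cong_mod K2 (rep (coset K2 x)) x" by (rule rep_coset_cong_mod[OF lin_closed_K2])

lemma induced_car: "Z \<in> car T1 \<Longrightarrow> induced Z \<in> car T2"
  using lift_fvs[OF rep_car1] unfolding quot_map_def tensor_simps by blast

lemma induced_ad:
  assumes Z: "Z \<in> car T1" and W: "W \<in> car T1"
  shows "induced (ad T1 Z W) = ad T2 (induced Z) (induced W)"
proof -
  have "induced (ad T1 Z W) = coset K2 (fadd (lift (rep Z)) (lift (rep W)))"
    unfolding tensor_simps using rep_car1[OF Z] rep_car1[OF W]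
    by (simp add: induced_coset fvs_fadd fmap_fadd fvs_fin)
  also have "\<dots> = ad T2 (induced Z) (induced W)"
    unfolding tensor_simps quot_map_def
    by (rule coset_cong_mod[OF lin_closed_K2], rule cong_mod_sym[OF lin_closed_K2],
        rule cong_mod_add[OF lin_closed_K2 rep_cong_K2 rep_cong_K2])
  finally show ?thesis .
qed

lemma induced_sc:
  assumes Z: "Z \<in> car T1"
  shows "induced (sc T1 d Z) = sc T2 d (induced Z)"
proof -
  have "induced (sc T1 d Z) = coset K2 (fsc d (lift (rep Z)))"
    unfolding tensor_simps using rep_car1[OF Z] by (simp add: induced_coset fvs_fsc fmap_fsc fvs_fin)
  also have "\<dots> = sc T2 d (induced Z)"
    unfolding tensor_simps quot_map_def
    by (rule coset_cong_mod[OF lin_closed_K2], rule cong_mod_sym[OF lin_closed_K2],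
        rule cong_mod_sc[OF lin_closed_K2 rep_cong_K2])
  finally show ?thesis .
qed

lemma induced_br:
  assumes Z: "Z \<in> car T1" and W: "W \<in> car T1"
  shows "induced (br T1 Z W) = br T2 (induced Z) (induced W)"
proof -
  note r = rep_car1[OF Z] rep_car1[OF W]
  let ?x = "lift (rep Z)" and ?y = "lift (rep W)"
  have hx: "?x \<in> fvs G2" "?y \<in> fvs G2" using lift_fvs r by auto
  have rx: "rep (coset K2 ?x) \<in> fvs G2" "rep (coset K2 ?y) \<in> fvs G2"
    using rep_fvs[OF lin_closed_K2 K2_fvs] hx by auto
  have "induced (br T1 Z W) = coset K2 (lift (tbr a1 b1 (rep Z) (rep W)))"
    unfolding tensor_simps using r by (simp add: induced_coset fvs_tbr1)
  also have "\<dots> = coset K2 (tbr a2 b2 ?x ?y)"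
    by (rule coset_cong_mod[OF lin_closed_K2 lift_tbr[OF r]])
  also have "\<dots> = coset K2 (tbr a2 b2 (rep (coset K2 ?x)) (rep (coset K2 ?y)))"
    by (rule coset_cong_mod[OF lin_closed_K2], rule cong_mod_sym[OF lin_closed_K2],
        rule cong_mod_trans[OF lin_closed_K2 tbr_cong_left[OF rx(2) rx(1) hx(1) rep_cong_K2]
          tbr_cong_right[OF hx(1) rx(2) hx(2) rep_cong_K2]])
  also have "\<dots> = br T2 (induced Z) (induced W)"
    unfolding tensor_simps quot_map_def ..
  finally show ?thesis .
qed

lemma induced_gr: "induced ` gr T1 b \<subseteq> gr T2 b"
proof
  fix Y assume "Y \<in> induced ` gr T1 b"
  then obtain f where f: "f \<in> fvs_gr G1 tdeg b" "Y = induced (coset K1 f)" by (auto simp: tensor_simps)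
  moreover have "f \<in> fvs G1" using f(1) fvs_gr_sub by auto
  ultimately have "Y = coset K2 (lift f)" using induced_coset by simp
  then show "Y \<in> gr T2 b" using lift_gr[OF f(1)] by (auto simp: tensor_simps)
qed

lemma induced_hom: "hom T1 T2 induced"
  unfolding hom_def using induced_car induced_ad induced_sc induced_br induced_gr by blast

end

context fixes V :: "('a, 'k::field) lsa" assumes vs: "vector_space V"
begin

lemma v_add_car: "x \<in> car V \<Longrightarrow> y \<in> car V \<Longrightarrow> ad V x y \<in> car V"
  using vs unfolding vector_space_def subspace_def by auto
lemma v_sc_car: "x \<in> car V \<Longrightarrow> sc V c x \<in> car V"
  using vs unfolding vector_space_def subspace_def by auto
lemma v_zr_car: "zr V \<in> car V"
  using vs unfolding vector_space_def subspace_def by auto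
lemma v_assoc: "x \<in> car V \<Longrightarrow> y \<in> car V \<Longrightarrow> z \<in> car V \<Longrightarrow> ad V (ad V x y) z = ad V x (ad V y z)"
  using vs unfolding vector_space_def by auto
lemma v_comm: "x \<in> car V \<Longrightarrow> y \<in> car V \<Longrightarrow> ad V x y = ad V y x"
  using vs unfolding vector_space_def by auto
lemma v_zero_add: "x \<in> car V \<Longrightarrow> ad V (zr V) x = x"
  using vs unfolding vector_space_def by auto
lemma v_add_zero: "x \<in> car V \<Longrightarrow> ad V x (zr V) = x"
  using v_zero_add v_comm v_zr_car by metis
lemma v_inv: "x \<in> car V \<Longrightarrow> ad V x (sc V (-1) x) = zr V"
  using vs unfolding vector_space_def by auto
lemma v_sc_add: "x \<in> car V \<Longrightarrow> y \<in> car V \<Longrightarrow> sc V c (ad V x y) = ad V (sc V c x) (sc V c y)"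
  using vs unfolding vector_space_def by auto
lemma v_add_sc: "x \<in> car V \<Longrightarrow> sc V (c + d) x = ad V (sc V c x) (sc V d x)"
  using vs unfolding vector_space_def by auto
lemma v_sc_sc: "x \<in> car V \<Longrightarrow> sc V c (sc V d x) = sc V (c * d) x"
  using vs unfolding vector_space_def by auto
lemma v_sc1: "x \<in> car V \<Longrightarrow> sc V 1 x = x"
  using vs unfolding vector_space_def by auto
lemma v_sc0: "x \<in> car V \<Longrightarrow> sc V 0 x = zr V"
proof -
  assume x: "x \<in> car V"
  have "sc V 0 x = sc V (1 + -1) x" by simp
  also have "\<dots> = ad V (sc V 1 x) (sc V (-1) x)" by (rule v_add_sc[OF x])
  also have "\<dots> = ad V x (sc V (-1) x)" using v_sc1[OF x] by simp
  finally show ?thesis using v_inv[OF x] by simp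
qed
lemma v_sc_zr: "sc V c (zr V) = zr V"
  using v_sc_sc[OF v_zr_car, of c 0] v_sc0[OF v_zr_car] by simp

lemma v_swap4: "x \<in> car V \<Longrightarrow> y \<in> car V \<Longrightarrow> z \<in> car V \<Longrightarrow> w \<in> car V \<Longrightarrow>
   ad V (ad V x y) (ad V z w) = ad V (ad V x z) (ad V y w)"
proof -
  assume a: "x \<in> car V" "y \<in> car V" "z \<in> car V" "w \<in> car V"
  have "ad V (ad V x y) (ad V z w) = ad V x (ad V y (ad V z w))" using a by (simp add: v_assoc v_add_car)
  also have "ad V y (ad V z w) = ad V z (ad V y w)"
    using a by (metis v_assoc v_comm)
  also have "ad V x (ad V z (ad V y w)) = ad V (ad V x z) (ad V y w)" using a by (simp add: v_assoc v_add_car)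
  finally show ?thesis .
qed

lemma v_cancel: "u \<in> car V \<Longrightarrow> v \<in> car V \<Longrightarrow> ad V u (sc V (-1) v) = zr V \<Longrightarrow> u = v"
proof -
  assume a: "u \<in> car V" "v \<in> car V" "ad V u (sc V (-1) v) = zr V"
  have "u = ad V u (zr V)" using a by (simp add: v_add_zero)
  also have "zr V = ad V (sc V (-1) v) v" using a v_inv[of v] by (simp add: v_comm v_sc_car)
  also have "ad V u (ad V (sc V (-1) v) v) = ad V (ad V u (sc V (-1) v)) v"
    by (rule v_assoc[symmetric]) (use a v_sc_car in auto)
  finally show ?thesis using a by (simp add: v_zero_add)
qed

end

text \<open>Identities in an abstract vector space are decided by passing to formal linear
  combinations and comparing coefficients.\<close>

definition lcomb :: "('a, 'k::field) lsa \<Rightarrow> ('k \<times> 'a) list \<Rightarrow> 'a" where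
  "lcomb V xs = foldr (\<lambda>(c, x) acc. ad V (sc V c x) acc) xs (zr V)"

definition ind :: "'a \<Rightarrow> 'a \<Rightarrow> 'k::field" where
  "ind x a = (if x = a then 1 else 0)"

definition coef :: "('k::field \<times> 'a) list \<Rightarrow> 'a \<Rightarrow> 'k" where
  "coef xs a = sum_list (map (\<lambda>(c, x). c * ind x a) xs)"

lemma lcomb_Nil[simp]: "lcomb V [] = zr V" unfolding lcomb_def by simp
lemma lcomb_Cons[simp]: "lcomb V ((c, x) # xs) = ad V (sc V c x) (lcomb V xs)"
  unfolding lcomb_def by simp
lemma coef_Nil[simp]: "coef [] a = 0" unfolding coef_def by simp
lemma coef_Cons[simp]: "coef ((c, x) # xs) a = c * ind x a + coef xs a" unfolding coef_def by simp
lemma coef_append[simp]: "coef (xs @ ys) a = coef xs a + coef ys a" unfolding coef_def by simp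
lemma coef_map_neg[simp]: "coef (map (\<lambda>(d, x). (- d, x)) xs) a = - coef xs a"
  by (induction xs) (auto simp: algebra_simps)
lemma coef_map_sc[simp]: "coef (map (\<lambda>(d, x). (c * d, x)) xs) a = c * coef xs a"
  by (induction xs) (auto simp: algebra_simps)

context fixes V :: "('a, 'k::field) lsa" assumes vs: "vector_space V"
begin

lemma lcomb_car: "snd ` set xs \<subseteq> car V \<Longrightarrow> lcomb V xs \<in> car V"
  by (induction xs) (auto simp: v_add_car[OF vs] v_sc_car[OF vs] v_zr_car[OF vs])

lemma lcomb_append: "snd ` set xs \<subseteq> car V \<Longrightarrow> snd ` set ys \<subseteq> car V \<Longrightarrow>
   ad V (lcomb V xs) (lcomb V ys) = lcomb V (xs @ ys)"
proof (induction xs)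
  case Nil then show ?case by (simp add: v_zero_add[OF vs] lcomb_car)
next
  case (Cons a xs)
  obtain c x where a: "a = (c, x)" by force
  show ?case using Cons by (simp add: a v_assoc[OF vs] v_sc_car[OF vs] lcomb_car)
qed

lemma lcomb_sc: "snd ` set xs \<subseteq> car V \<Longrightarrow> sc V c (lcomb V xs) = lcomb V (map (\<lambda>(d, x). (c * d, x)) xs)"
proof (induction xs)
  case Nil then show ?case by (simp add: v_sc_zr[OF vs])
next
  case (Cons a xs)
  obtain d x where a: "a = (d, x)" by force
  show ?case using Cons by (simp add: a v_sc_add[OF vs] v_sc_car[OF vs] lcomb_car v_sc_sc[OF vs])
qed

lemma lcomb_single: "x \<in> car V \<Longrightarrow> lcomb V [(1, x)] = x"
  by (simp add: v_sc1[OF vs] v_add_zero[OF vs])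

lemma lcomb_split: "snd ` set xs \<subseteq> car V \<Longrightarrow> a \<in> car V \<Longrightarrow>
  lcomb V xs = ad V (sc V (coef xs a) a) (lcomb V (filter (\<lambda>(c, x). x \<noteq> a) xs))"
proof (induction xs)
  case Nil then show ?case by (simp add: v_sc0[OF vs] v_zero_add[OF vs] v_zr_car[OF vs])
next
  case (Cons y xs)
  obtain c x where y: "y = (c, x)" by force
  have IH: "lcomb V xs = ad V (sc V (coef xs a) a) (lcomb V (filter (\<lambda>(c, x). x \<noteq> a) xs))"
    using Cons by auto
  have xc: "x \<in> car V" "snd ` set xs \<subseteq> car V" using Cons(2) y by auto
  have fc: "snd ` set (filter (\<lambda>(c, x). x \<noteq> a) xs) \<subseteq> car V" using xc(2) by auto
  note cs = v_sc_car[OF vs] lcomb_car[OF xc(2)] lcomb_car[OF fc] xc(1) Cons(3)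
  show ?case
  proof (cases "x = a")
    case True
    have "lcomb V (y # xs) = ad V (sc V c a) (ad V (sc V (coef xs a) a) (lcomb V (filter (\<lambda>(c, x). x \<noteq> a) xs)))"
      using IH True y by simp
    also have "\<dots> = ad V (sc V (c + coef xs a) a) (lcomb V (filter (\<lambda>(c, x). x \<noteq> a) xs))"
      using cs by (simp add: v_assoc[OF vs, symmetric] v_add_sc[OF vs])
    finally show ?thesis using True y by (simp add: ind_def)
  next
    case False
    have "lcomb V (y # xs) = ad V (sc V c x) (ad V (sc V (coef xs a) a) (lcomb V (filter (\<lambda>(c, x). x \<noteq> a) xs)))"
      using IH y by simp
    also have "\<dots> = ad V (sc V (coef xs a) a) (ad V (sc V c x) (lcomb V (filter (\<lambda>(c, x). x \<noteq> a) xs)))"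
      using cs by (metis v_assoc[OF vs] v_comm[OF vs])
    finally show ?thesis using False y by (simp add: ind_def)
  qed
qed

lemma lcomb_zero: "snd ` set xs \<subseteq> car V \<Longrightarrow> (\<forall>a. coef xs a = 0) \<Longrightarrow> lcomb V xs = zr V"
proof (induction "length xs" arbitrary: xs rule: less_induct)
  case less
  show ?case
  proof (cases xs)
    case Nil then show ?thesis by simp
  next
    case (Cons y ys)
    obtain c a where y: "y = (c, a)" by force
    have ac: "a \<in> car V" using less(2) Cons y by auto
    let ?f = "filter (\<lambda>(c, x). x \<noteq> a) xs"
    have fc: "snd ` set ?f \<subseteq> car V" using less(2) by auto
    have "length ?f < length xs" using Cons y by (simp add: le_imp_less_Suc)
    moreover have "\<forall>b. coef ?f b = 0"
    proof
      fix b
      have "coef ?f b = (if b = a then 0 else coef xs b)"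
        by (induction xs) (auto simp: ind_def)
      then show "coef ?f b = 0" using less(3) by simp
    qed
    ultimately have "lcomb V ?f = zr V" using less(1) fc by blast
    then show ?thesis using lcomb_split[OF less(2) ac] less(3) ac
      by (simp add: v_sc0[OF vs] v_zero_add[OF vs] v_zr_car[OF vs])
  qed
qed

lemma lcomb_eq:
  assumes "snd ` set xs \<subseteq> car V" "snd ` set ys \<subseteq> car V" "\<forall>a. coef xs a = coef ys a"
  shows "lcomb V xs = lcomb V ys"
proof (rule v_cancel[OF vs])
  show "lcomb V xs \<in> car V" "lcomb V ys \<in> car V" using assms lcomb_car by auto
  have s: "snd ` set (map (\<lambda>(d, x). (- d, x)) ys) \<subseteq> car V" using assms(2) by auto
  have "ad V (lcomb V xs) (sc V (-1) (lcomb V ys)) = lcomb V (xs @ map (\<lambda>(d, x). (- d, x)) ys)"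
    using assms by (simp add: lcomb_sc lcomb_append[OF _ s])
  also have "\<dots> = zr V" by (rule lcomb_zero) (use assms s in auto)
  finally show "ad V (lcomb V xs) (sc V (-1) (lcomb V ys)) = zr V" .
qed

lemma lcomb_lsub: "snd ` set xs \<subseteq> car V \<Longrightarrow> snd ` set ys \<subseteq> car V \<Longrightarrow>
   lsub V (lcomb V xs) (lcomb V ys) = lcomb V (xs @ map (\<lambda>(d, x). (- d, x)) ys)"
  unfolding lsub_def by (simp add: lcomb_sc, rule lcomb_append) auto

end

lemma sg_sq: "sg b * sg b = (1::'k::field)" by (simp add: sg_def)

lemma v_cross_rearrange:
  assumes vs: "vector_space V" and c: "P1 \<in> car V" "Q1 \<in> car V" "P2 \<in> car V" "Q2 \<in> car V" "X2 \<in> car V" "Y2 \<in> car V"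
  shows "ad V (lsub V P1 (sc V (sg b) Q1)) (lsub V P2 (sc V (sg b) Q2)) =
    lsub V (ad V (ad V P1 (sc V (sg b) Y2)) (ad V X2 P2))
      (sc V (sg b) (ad V (ad V Q1 (sc V (sg b) X2)) (ad V Y2 Q2)))"
proof -
  let ?L = "\<lambda>x. lcomb V [(1, x)]"
  have "ad V (lsub V (?L P1) (sc V (sg b) (?L Q1))) (lsub V (?L P2) (sc V (sg b) (?L Q2))) =
    lsub V (ad V (ad V (?L P1) (sc V (sg b) (?L Y2))) (ad V (?L X2) (?L P2)))
      (sc V (sg b) (ad V (ad V (?L Q1) (sc V (sg b) (?L X2))) (ad V (?L Y2) (?L Q2))))"
    by (simp only: lcomb_sc[OF vs] lcomb_append[OF vs] lcomb_lsub[OF vs] set_simps set_append set_map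
        image_insert image_empty image_Un insert_subset empty_subsetI c simp_thms snd_conv map_append
        list.map prod.case append.simps, rule lcomb_eq[OF vs])
      (simp_all add: c, cases b, simp_all add: sg_def algebra_simps)
  then show ?thesis using c by (simp only: lcomb_single[OF vs] c)
qed

lemma act_car: assumes "is_action P M a" "p \<in> car P" "m \<in> car M" shows "a p m \<in> car M"
proof -
  have "\<forall>p\<in>car P. \<forall>m\<in>car M. a p m \<in> car M" using assms(1) unfolding is_action_def by (elim conjE) assumption
  then show ?thesis using assms by blast
qed
lemma act_addl: assumes "is_action P M a" "p \<in> car P" "p' \<in> car P" "m \<in> car M"
  shows "a (ad P p p') m = ad M (a p m) (a p' m)"
proof -
  have "\<forall>p\<in>car P. \<forall>p'\<in>car P. \<forall>m\<in>car M. a (ad P p p') m = ad M (a p m) (a p' m)"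
    using assms(1) unfolding is_action_def by (elim conjE) assumption
  then show ?thesis using assms by blast
qed
lemma act_scl: assumes "is_action P M a" "p \<in> car P" "m \<in> car M"
  shows "a (sc P c p) m = sc M c (a p m)"
proof -
  have "\<forall>c. \<forall>p\<in>car P. \<forall>m\<in>car M. a (sc P c p) m = sc M c (a p m)"
    using assms(1) unfolding is_action_def by (elim conjE) assumption
  then show ?thesis using assms by blast
qed
lemma act_addr: assumes "is_action P M a" "p \<in> car P" "m \<in> car M" "m' \<in> car M"
  shows "a p (ad M m m') = ad M (a p m) (a p m')"
proof -
  have "\<forall>p\<in>car P. \<forall>m\<in>car M. \<forall>m'\<in>car M. a p (ad M m m') = ad M (a p m) (a p m')"
    using assms(1) unfolding is_action_def by (elim conjE) assumption
  then show ?thesis using assms by blast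
qed
lemma act_scr: assumes "is_action P M a" "p \<in> car P" "m \<in> car M"
  shows "a p (sc M c m) = sc M c (a p m)"
proof -
  have "\<forall>c. \<forall>p\<in>car P. \<forall>m\<in>car M. a p (sc M c m) = sc M c (a p m)"
    using assms(1) unfolding is_action_def by (elim conjE) assumption
  then show ?thesis using assms by blast
qed
lemma act_gr: assumes "is_action P M a" "p \<in> gr P i" "m \<in> gr M j"
  shows "a p m \<in> gr M (i \<noteq> j)"
proof -
  have "\<forall>i j. \<forall>p\<in>gr P i. \<forall>m\<in>gr M j. a p m \<in> gr M (i \<noteq> j)"
    using assms(1) unfolding is_action_def by (elim conjE) assumption
  then show ?thesis using assms by blast
qed
lemma act_gr_simp: "is_action P M a \<Longrightarrow> p \<in> gr P i \<Longrightarrow> m \<in> gr M j \<Longrightarrow> a p m \<in> gr M (i = (\<not> j))"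
  using act_gr[of P M a p i m j] by simp

lemma act_br1: assumes "is_action P M a" "p \<in> gr P i" "p' \<in> gr P j" "m \<in> car M"
  shows "a (br P p p') m = lsub M (a p (a p' m)) (sc M (sg (i \<and> j)) (a p' (a p m)))"
proof -
  have "\<forall>i j. \<forall>p\<in>gr P i. \<forall>p'\<in>gr P j. \<forall>m\<in>car M.
         a (br P p p') m = lsub M (a p (a p' m)) (sc M (sg (i \<and> j)) (a p' (a p m)))"
    using assms(1) unfolding is_action_def by (elim conjE) assumption
  then show ?thesis using assms by blast
qed
lemma act_br2: assumes "is_action P M a" "p \<in> gr P i" "m \<in> gr M j" "m' \<in> car M"
  shows "a p (br M m m') = ad M (br M (a p m) m') (sc M (sg (i \<and> j)) (br M m (a p m')))"
proof -
  have "\<forall>i j. \<forall>p\<in>gr P i. \<forall>m\<in>gr M j. \<forall>m'\<in>car M.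
         a p (br M m m') = ad M (br M (a p m) m') (sc M (sg (i \<and> j)) (br M m (a p m')))"
    using assms(1) unfolding is_action_def by (elim conjE) assumption
  then show ?thesis using assms by blast
qed

lemma lsa_vs: "lie_superalgebra A \<Longrightarrow> vector_space A"
  unfolding lie_superalgebra_def by (elim conjE) assumption
lemma lsa_graded: "lie_superalgebra A \<Longrightarrow> graded A"
  unfolding lie_superalgebra_def by (elim conjE) assumption
lemma lsa_sub: assumes "lie_superalgebra A" shows "subspace A (gr A b)"
proof -
  have "\<forall>b. subspace A (gr A b)" using lsa_graded[OF assms] unfolding graded_def by (elim conjE) assumption
  then show ?thesis by blast
qed
lemma lsa_gr_car: "lie_superalgebra A \<Longrightarrow> x \<in> gr A b \<Longrightarrow> x \<in> car A"
  using lsa_sub[of A b] unfolding subspace_def by blast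
lemma lsa_zr_gr: "lie_superalgebra A \<Longrightarrow> zr A \<in> gr A b"
  using lsa_sub[of A b] unfolding subspace_def by blast
lemma lsa_gr_ad: "lie_superalgebra A \<Longrightarrow> x \<in> gr A b \<Longrightarrow> y \<in> gr A b \<Longrightarrow> ad A x y \<in> gr A b"
  using lsa_sub[of A b] unfolding subspace_def by blast
lemma lsa_decomp: assumes "lie_superalgebra A" "x \<in> car A"
  obtains x0 x1 where "x0 \<in> gr A False" "x1 \<in> gr A True" "x = ad A x0 x1"
proof -
  have "\<forall>x\<in>car A. \<exists>x0\<in>gr A False. \<exists>x1\<in>gr A True. x = ad A x0 x1"
    using lsa_graded[OF assms(1)] unfolding graded_def by (elim conjE) assumption
  then show ?thesis using assms that by blast
qed
lemma lsa_br_car: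
  assumes "lie_superalgebra A" "x \<in> car A" "y \<in> car A"
  shows "br A x y \<in> car A"
proof -
  have "\<forall>x\<in>car A. \<forall>y\<in>car A. br A x y \<in> car A" using assms(1) unfolding lie_superalgebra_def by (elim conjE) assumption
  then show ?thesis using assms by blast
qed
lemma lsa_br_add: assumes "lie_superalgebra A" "x \<in> car A" "y \<in> car A" "z \<in> car A"
  shows "br A (ad A x y) z = ad A (br A x z) (br A y z)" "br A z (ad A x y) = ad A (br A z x) (br A z y)"
proof -
  have "\<forall>x\<in>car A. \<forall>y\<in>car A. \<forall>z\<in>car A.
          br A (ad A x y) z = ad A (br A x z) (br A y z)
        \<and> br A z (ad A x y) = ad A (br A z x) (br A z y)" using assms(1) unfolding lie_superalgebra_def by (elim conjE) assumption
  then show "br A (ad A x y) z = ad A (br A x z) (br A y z)" "br A z (ad A x y) = ad A (br A z x) (br A z y)"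
    using assms by blast+
qed
lemma lsa_br_sc: assumes "lie_superalgebra A" "x \<in> car A" "y \<in> car A"
  shows "br A (sc A c x) y = sc A c (br A x y)" "br A x (sc A c y) = sc A c (br A x y)"
proof -
  have "\<forall>c. \<forall>x\<in>car A. \<forall>y\<in>car A. br A (sc A c x) y = sc A c (br A x y)
        \<and> br A x (sc A c y) = sc A c (br A x y)" using assms(1) unfolding lie_superalgebra_def by (elim conjE) assumption
  then show "br A (sc A c x) y = sc A c (br A x y)" "br A x (sc A c y) = sc A c (br A x y)"
    using assms by blast+
qed
lemma lsa_br_zr: assumes "lie_superalgebra A" "y \<in> car A" shows "br A (zr A) y = zr A"
proof -
  have z: "zr A \<in> car A" using v_zr_car[OF lsa_vs[OF assms(1)]] .
  have "br A (zr A) y = br A (sc A 0 (zr A)) y" using v_sc0[OF lsa_vs[OF assms(1)] z] by simp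
  also have "\<dots> = sc A 0 (br A (zr A) y)" using lsa_br_sc(1)[OF assms(1) z assms(2)] .
  also have "\<dots> = zr A" using v_sc0[OF lsa_vs[OF assms(1)] lsa_br_car[OF assms(1) z assms(2)]] .
  finally show ?thesis .
qed

lemma act_zr_r: assumes "is_action P M a" "vector_space M" "p \<in> car P" shows "a p (zr M) = zr M"
proof -
  have z: "zr M \<in> car M" using v_zr_car[OF assms(2)] .
  have "a p (zr M) = a p (sc M 0 (zr M))" using v_sc0[OF assms(2) z] by simp
  also have "\<dots> = sc M 0 (a p (zr M))" using act_scr[OF assms(1,3) z] .
  also have "\<dots> = zr M" using v_sc0[OF assms(2) act_car[OF assms(1,3) z]] .
  finally show ?thesis .
qed
lemma act_zr_l:
  assumes "is_action P M a" "vector_space P" "vector_space M" "m \<in> car M"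
  shows "a (zr P) m = zr M"
proof -
  have z: "zr P \<in> car P" using v_zr_car[OF assms(2)] .
  have "a (zr P) m = a (sc P 0 (zr P)) m" using v_sc0[OF assms(2) z] by simp
  also have "\<dots> = sc M 0 (a (zr P) m)" using act_scl[OF assms(1) z assms(4)] .
  also have "\<dots> = zr M" using v_sc0[OF assms(3) act_car[OF assms(1) z assms(4)]] .
  finally show ?thesis .
qed

lemma dsum_simps[simp]:
  "car (dsum A B) = car A \<times> car B"
  "zr (dsum A B) = (zr A, zr B)"
  "ad (dsum A B) (a, b) (a', b') = (ad A a a', ad B b b')"
  "sc (dsum A B) c (a, b) = (sc A c a, sc B c b)"
  "br (dsum A B) (a, b) (a', b') = (br A a a', br B b b')"
  "gr (dsum A B) i = gr A i \<times> gr B i"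
  by (simp_all add: dsum_def)

lemma dsum_lsub[simp]: "lsub (dsum A B) (a, b) (a', b') = (lsub A a a', lsub B b b')"
  by (simp add: lsub_def)

lemma dsum_act_simp[simp]: "dsum_act N aLN aMN (l, m) n = ad N (aLN l n) (aMN m n)"
  by (simp add: dsum_act_def)
lemma act_dsum_simp[simp]: "act_dsum aNL aNM n (l, m) = (aNL n l, aNM n m)"
  by (simp add: act_dsum_def)

lemma dsum_gr_closed: "gr_closed A \<Longrightarrow> gr_closed B \<Longrightarrow> gr_closed (dsum A B)"
  unfolding gr_closed_def by auto

lemma fvs_gr_dl: "p \<in> G \<Longrightarrow> dl p \<in> fvs_gr G dg (dg p)"
  unfolding fvs_gr_def using fvs_dl[of p G] by (auto simp: dl_def)

definition gen_swap :: "'n \<times> 'l \<times> bool \<times> bool \<Rightarrow> 'l \<times> 'n \<times> bool \<times> bool" where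
  "gen_swap = (\<lambda>(n, l, i, j). (l, n, j, i))"
definition swap_coef :: "'n \<times> 'l \<times> bool \<times> bool \<Rightarrow> 'k::field" where
  "swap_coef = (\<lambda>(n, l, i, j). - sg (i \<and> j))"

lemma gen_swap_simp[simp]: "gen_swap (n, l, i, j) = (l, n, j, i)" by (simp add: gen_swap_def)
lemma swap_coef_simp[simp]: "swap_coef (n, l, i, j) = - sg (i \<and> j)" by (simp add: swap_coef_def)

lemmas fmap_lin = fmap_fminus fmap_fadd fmap_fsc fmap_dl fins

lemma fmap_swap_trels:
  fixes L :: "('l, 'k::field) lsa" and N :: "('n, 'k) lsa"
  assumes "r \<in> trels N L aNL aLN"
  obtains k E where "E \<in> trels L N aLN aNL" "fmap gen_swap swap_coef r = fsc k E"
  using assms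
proof (cases rule: trels_cases)
  case (R1 c n l i j)
  show ?thesis
  proof (rule that)
    show "fminus (fsc c (dl (l, n, j, i))) (dl (l, sc N c n, j, i)) \<in> trels L N aLN aNL" by (rule trels_sc_right) (use R1 in auto)
    show "fmap gen_swap swap_coef r = fsc (- sg (i \<and> j)) (fminus (fsc c (dl (l, n, j, i))) (dl (l, sc N c n, j, i)))"
      unfolding R1 by (simp add: fmap_lin) (rule ext, simp add: fminus_def fadd_def fsc_def algebra_simps)
  qed
next
  case (R2 c n l i j)
  show ?thesis
  proof (rule that)
    show "fminus (fsc c (dl (l, n, j, i))) (dl (sc L c l, n, j, i)) \<in> trels L N aLN aNL" by (rule trels_sc_left) (use R2 in auto)
    show "fmap gen_swap swap_coef r = fsc (- sg (i \<and> j)) (fminus (fsc c (dl (l, n, j, i))) (dl (sc L c l, n, j, i)))"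
      unfolding R2 by (simp add: fmap_lin) (rule ext, simp add: fminus_def fadd_def fsc_def algebra_simps)
  qed
next
  case (R3 n n' l i j)
  show ?thesis
  proof (rule that)
    show "fminus (dl (l, ad N n n', j, i)) (fadd (dl (l, n, j, i)) (dl (l, n', j, i))) \<in> trels L N aLN aNL"
      by (rule trels_add_right) (use R3 in auto)
    show "fmap gen_swap swap_coef r = fsc (- sg (i \<and> j)) (fminus (dl (l, ad N n n', j, i)) (fadd (dl (l, n, j, i)) (dl (l, n', j, i))))"
      unfolding R3 by (simp add: fmap_lin) (rule ext, simp add: fminus_def fadd_def fsc_def algebra_simps)
  qed
next
  case (R4 n l l' i j)
  show ?thesis
  proof (rule that)
    show "fminus (dl (ad L l l', n, j, i)) (fadd (dl (l, n, j, i)) (dl (l', n, j, i))) \<in> trels L N aLN aNL"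
      by (rule trels_add_left) (use R4 in auto)
    show "fmap gen_swap swap_coef r = fsc (- sg (i \<and> j)) (fminus (dl (ad L l l', n, j, i)) (fadd (dl (l, n, j, i)) (dl (l', n, j, i))))"
      unfolding R4 by (simp add: fmap_lin) (rule ext, simp add: fminus_def fadd_def fsc_def algebra_simps)
  qed
next
  case (R5 n n' l i i' j)
  let ?E = "fadd (fminus (dl (l, br N n n', j, i \<noteq> i'))
                  (fsc (sg (i' \<and> (j \<noteq> i))) (dl (aNL n' l, n, j \<noteq> i', i))))
          (fsc (sg (j \<and> i)) (dl (aNL n l, n', j \<noteq> i, i')))"
  show ?thesis
  proof (rule that)
    show "?E \<in> trels L N aLN aNL" by (rule trels_br_right) (use R5 in auto)
    show "fmap gen_swap swap_coef r = fsc (- sg ((i \<noteq> i') \<and> j)) ?E"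
      unfolding R5 by (simp add: fmap_lin) (rule ext, cases i; cases i'; cases j; simp add: fminus_def fadd_def fsc_def sg_def algebra_simps)
  qed
next
  case (R6 n l l' i j j')
  let ?E = "fadd (fminus (dl (br L l l', n, j \<noteq> j', i)) (dl (l, aLN l' n, j, j' \<noteq> i)))
          (fsc (sg (j \<and> j')) (dl (l', aLN l n, j', j \<noteq> i)))"
  show ?thesis
  proof (rule that)
    show "?E \<in> trels L N aLN aNL" by (rule trels_br_left) (use R6 in auto)
    show "fmap gen_swap swap_coef r = fsc (- sg (i \<and> (j \<noteq> j'))) ?E"
      unfolding R6 by (simp add: fmap_lin) (rule ext, cases i; cases j; cases j'; simp add: fminus_def fadd_def fsc_def sg_def algebra_simps)
  qed
qed

lemma fmap_swap_tbr:
  fixes L :: "('l, 'k::field) lsa" and N :: "('n, 'k) lsa"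
  assumes "p \<in> tgens N L" "q \<in> tgens N L"
  shows "cong_mod (tker L N aLN aNL) (fmap gen_swap swap_coef (tbr aNL aLN (dl p) (dl q)))
    (tbr aLN aNL (fmap gen_swap swap_coef (dl p)) (fmap gen_swap swap_coef (dl q)))"
proof -
  let ?K = "tker L N aLN aNL"
  obtain n l i j n' l' i' j' where p: "p = (n, l, i, j)" "n \<in> gr N i" "l \<in> gr L j"
    and q: "q = (n', l', i', j')" "n' \<in> gr N i'" "l' \<in> gr L j'" using assms unfolding tgens_def by auto
  let ?f = "dl (l', n', j', i') :: 'l \<times> 'n \<times> bool \<times> bool \<Rightarrow> 'k" and ?g = "dl (l, n, j, i) :: 'l \<times> 'n \<times> bool \<times> bool \<Rightarrow> 'k"
  have fg: "?f \<in> fvs_gr (tgens L N) tdeg (j' \<noteq> i')" "?g \<in> fvs_gr (tgens L N) tdeg (j \<noteq> i)"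
    using fvs_gr_dl[of "(l', n', j', i')" "tgens L N" tdeg] fvs_gr_dl[of "(l, n, j, i)" "tgens L N" tdeg] p q
    by (auto simp: tdeg_def)
  have an: "fadd (tbr aLN aNL ?f ?g) (fsc (sg ((j' \<noteq> i') \<and> (j \<noteq> i))) (tbr aLN aNL ?g ?f)) \<in> ?K"
    by (rule tker_anti[OF fg])
  let ?k = "- sg (i \<and> j) * sg ((i \<noteq> j) \<and> (i' \<noteq> j')) * sg (i' \<and> j') :: 'k"
  have "fminus (fmap gen_swap swap_coef (tbr aNL aLN (dl p) (dl q))) (tbr aLN aNL (fmap gen_swap swap_coef (dl p)) (fmap gen_swap swap_coef (dl q)))
    = fsc ?k (fadd (tbr aLN aNL ?f ?g) (fsc (sg ((j' \<noteq> i') \<and> (j \<noteq> i))) (tbr aLN aNL ?g ?f)))"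
    unfolding p q by (simp add: fmap_lin tbr_dl tbr_fsc1 tbr_fsc2)
      (rule ext, cases i; cases i'; cases j; cases j'; simp add: fminus_def fadd_def fsc_def sg_def algebra_simps)
  then show ?thesis
    unfolding cong_mod_def using lin_closed_sc[OF tker_lin_closed an] by metis
qed

lemma tensor_map_swap:
  fixes L :: "('l, 'k::field) lsa" and N :: "('n, 'k) lsa"
    and aLN :: "'l \<Rightarrow> 'n \<Rightarrow> 'n" and aNL :: "'n \<Rightarrow> 'l \<Rightarrow> 'l"
  assumes gL: "gr_closed L" and gN: "gr_closed N" and a1: "graded_act L N aLN" and a2: "graded_act N L aNL"
  shows "tensor_map N L aNL aLN L N aLN aNL gen_swap swap_coef"
proof
  show "tgood N L aNL aLN (fvs (tgens N L))" by (rule tgood_fvs[OF gN gL a2 a1])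
  show "tgood L N aLN aNL (fvs (tgens L N))" by (rule tgood_fvs[OF gL gN a1 a2])
  fix p assume "p \<in> tgens N L"
  then show "gen_swap p \<in> tgens L N" "tdeg (gen_swap p) = tdeg p" by (auto simp: tgens_def tdeg_def)
next
  fix r assume "r \<in> trels N L aNL aLN"
  then obtain k E where "E \<in> trels L N aLN aNL" "fmap gen_swap swap_coef r = fsc k E"
    by (rule fmap_swap_trels)
  then show "fmap gen_swap swap_coef r \<in> tker L N aLN aNL"
    using tker_trels lin_closed_sc[OF tker_lin_closed] by metis
qed (rule fmap_swap_tbr)

text \<open>Hypothesis (iii) makes the generators \<open>x \<otimes> p\<close> with \<open>x \<in> I\<close> vanish in
  \<open>N \<otimes> P\<close>; the swap transports this to \<open>p \<otimes> x\<close> in \<open>P \<otimes> N\<close>.\<close>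

lemma canon_trivial_tker:
  fixes P :: "('p, 'k::field) lsa" and N :: "('n, 'k) lsa"
  assumes P: "lie_superalgebra P" and N: "lie_superalgebra N"
    and aPN: "is_action P N aPN" and aNP: "is_action N P aNP"
    and ct: "canon_trivial N I P aNP aPN"
    and x: "x \<in> gr N k" "x \<in> I" and p: "p \<in> gr P i"
  shows "dl (p, x, i, k) \<in> tker P N aPN aNP"
proof -
  obtain phi where hom: "hom (tensor (subalg N I) P aNP aPN) (tensor N P aNP aPN) phi"
    and gen: "\<forall>x m i j. x \<in> gr N i \<inter> I \<and> m \<in> gr P j \<longrightarrow>
             phi (tsym (subalg N I) P aNP aPN x m i j) = tsym N P aNP aPN x m i j"
    and zer: "\<forall>X\<in>car (tensor (subalg N I) P aNP aPN). phi X = zr (tensor N P aNP aPN)"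
    using ct unfolding canon_trivial_def by blast
  have "(x, p, k, i) \<in> tgens (subalg N I) P" using x p by (simp add: subalg_def)
  then have c: "tsym (subalg N I) P aNP aPN x p k i \<in> car (tensor (subalg N I) P aNP aPN)"
    unfolding tsym_def tensor_simps by (intro imageI fvs_dl)
  have g1: "phi (tsym (subalg N I) P aNP aPN x p k i) = tsym N P aNP aPN x p k i"
    using gen[rule_format, of x k p i] x p by simp
  have "tsym N P aNP aPN x p k i = zr (tensor N P aNP aPN)" using zer[rule_format, OF c] g1 by simp
  then have "coset (tker N P aNP aPN) (dl (x, p, k, i)) = coset (tker N P aNP aPN) fzero"
    unfolding tsym_def tensor_simps .
  then have "cong_mod (tker N P aNP aPN) (dl (x, p, k, i)) fzero" by (rule cong_mod_of_coset_eq[OF tker_lin_closed])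
  then have d: "dl (x, p, k, i) \<in> tker N P aNP aPN" by (rule cong_mod_mem[OF tker_lin_closed _ tker_zero])
  interpret sw: tensor_map N P aNP aPN P N aPN aNP gen_swap swap_coef
    by (rule tensor_map_swap[OF lsa_gr_closed[OF P] lsa_gr_closed[OF N] action_graded[OF aPN] action_graded[OF aNP]])
  have "fmap gen_swap swap_coef (dl (x, p, k, i)) \<in> tker P N aPN aNP" by (rule sw.lift_tker[OF d])
  then have "fsc (- sg (k \<and> i)) (fmap gen_swap swap_coef (dl (x, p, k, i))) \<in> tker P N aPN aNP" by (rule lin_closed_sc[OF tker_lin_closed])
  moreover have "fsc (- sg (k \<and> i)) (fmap gen_swap swap_coef (dl (x, p, k, i))) = (dl (p, x, i, k) :: 'p \<times> 'n \<times> bool \<times> bool \<Rightarrow> 'k)"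
    by (simp add: fmap_dl fsc_fsc sg_sq fsc_one)
  ultimately show ?thesis by simp
qed

lemma act_ideal_mem: "lie_superalgebra M \<Longrightarrow> lie_superalgebra N \<Longrightarrow> m \<in> gr M a \<Longrightarrow> n \<in> gr N b \<Longrightarrow>
   aMN m n \<in> act_ideal M N aMN"
  unfolding act_ideal_def lspan_def
proof (rule InterI)
  fix U assume a: "lie_superalgebra M" "lie_superalgebra N" "m \<in> gr M a" "n \<in> gr N b"
    and "U \<in> {U. {aMN m n |m n. m \<in> car M \<and> n \<in> car N} \<subseteq> U \<and> subspace N U}"
  then have "{aMN m n |m n. m \<in> car M \<and> n \<in> car N} \<subseteq> U" by simp
  moreover have "m \<in> car M" "n \<in> car N" using lsa_gr_car[OF a(1) a(3)] lsa_gr_car[OF a(2) a(4)] by auto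
  ultimately show "aMN m n \<in> U" by blast
qed

definition gen_map :: "('a \<Rightarrow> 'b) \<Rightarrow> 'a \<times> 'n \<times> bool \<times> bool \<Rightarrow> 'b \<times> 'n \<times> bool \<times> bool" where
  "gen_map \<phi> = (\<lambda>(a, n, i, j). (\<phi> a, n, i, j))"

lemma gen_map_simp[simp]: "gen_map \<phi> (a, n, i, j) = (\<phi> a, n, i, j)"
  by (simp add: gen_map_def)

text \<open>The last hypothesis only asks the two actions on \<open>N\<close> to agree modulo the relations of
  the target.  This is what lets the projections of \<open>L \<oplus> M\<close> qualify: the stray generators
  \<open>l \<otimes> {}^m n\<close> are relations by hypothesis (iii).\<close>

locale factor_map =
  fixes A :: "('a, 'k::field) lsa" and B :: "('b, 'k) lsa" and N :: "('n, 'k) lsa"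
    and aAN :: "'a \<Rightarrow> 'n \<Rightarrow> 'n" and aNA :: "'n \<Rightarrow> 'a \<Rightarrow> 'a"
    and aBN :: "'b \<Rightarrow> 'n \<Rightarrow> 'n" and aNB :: "'n \<Rightarrow> 'b \<Rightarrow> 'b" and \<phi> :: "'a \<Rightarrow> 'b"
  assumes grA: "gr_closed A" and grB: "gr_closed B" and grN: "gr_closed N"
    and actAN: "is_action A N aAN" and actNA: "is_action N A aNA"
    and actBN: "is_action B N aBN" and actNB: "is_action N B aNB"
    and \<phi>_gr: "\<And>a i. a \<in> gr A i \<Longrightarrow> \<phi> a \<in> gr B i"
    and \<phi>_ad: "\<And>a a' i. a \<in> gr A i \<Longrightarrow> a' \<in> gr A i \<Longrightarrow> \<phi> (ad A a a') = ad B (\<phi> a) (\<phi> a')"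
    and \<phi>_sc: "\<And>a i c. a \<in> gr A i \<Longrightarrow> \<phi> (sc A c a) = sc B c (\<phi> a)"
    and \<phi>_br: "\<And>a a' i i'. a \<in> gr A i \<Longrightarrow> a' \<in> gr A i' \<Longrightarrow> \<phi> (br A a a') = br B (\<phi> a) (\<phi> a')"
    and \<phi>_act: "\<And>n a i j. n \<in> gr N j \<Longrightarrow> a \<in> gr A i \<Longrightarrow> aNB n (\<phi> a) = \<phi> (aNA n a)"
    and act_cong: "\<And>a n b i j k. a \<in> gr A i \<Longrightarrow> n \<in> gr N j \<Longrightarrow> b \<in> gr B k \<Longrightarrow>
          cong_mod (tker B N aBN aNB) (dl (b, aAN a n, k, i \<noteq> j)) (dl (b, aBN (\<phi> a) n, k, i \<noteq> j))"
begin

lemma lift_trels: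
  assumes "r \<in> trels A N aAN aNA"
  shows "fmap (gen_map \<phi>) (\<lambda>_. 1) r \<in> tker B N aBN aNB"
  using assms
proof (cases rule: trels_cases)
  case (R1 c a n i j)
  then show ?thesis by (simp add: fmap_lin fsc_one \<phi>_sc \<phi>_gr tker_trels trels_sc_left)
next
  case (R2 c a n i j)
  then show ?thesis by (simp add: fmap_lin fsc_one \<phi>_gr tker_trels trels_sc_right)
next
  case (R3 a a' n i j)
  then show ?thesis by (simp add: fmap_lin fsc_one \<phi>_ad \<phi>_gr tker_trels trels_add_left)
next
  case (R4 a n n' i j)
  then show ?thesis by (simp add: fmap_lin fsc_one \<phi>_gr tker_trels trels_add_right)
next
  case (R5 a a' n i i' j)
  let ?K = "tker B N aBN aNB" and ?s = "sg (i \<and> i')"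
  let ?R = "fadd (fminus (dl (br B (\<phi> a) (\<phi> a'), n, i \<noteq> i', j)) (dl (\<phi> a, aBN (\<phi> a') n, i, i' \<noteq> j)))
              (fsc ?s (dl (\<phi> a', aBN (\<phi> a) n, i', i \<noteq> j)))"
  let ?D1 = "fminus (dl (\<phi> a, aAN a' n, i, i' \<noteq> j)) (dl (\<phi> a, aBN (\<phi> a') n, i, i' \<noteq> j))"
  let ?D2 = "fminus (dl (\<phi> a', aAN a n, i', i \<noteq> j)) (dl (\<phi> a', aBN (\<phi> a) n, i', i \<noteq> j))"
  have K: "lin_closed ?K" by (rule tker_lin_closed)
  have "?R \<in> ?K" using R5 \<phi>_gr by (intro tker_trels trels_br_left)
  moreover have "?D1 \<in> ?K" "?D2 \<in> ?K"
    using act_cong[of a' i' n j "\<phi> a" i] act_cong[of a i n j "\<phi> a'" i'] R5 \<phi>_gr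
    by (auto simp: cong_mod_def)
  moreover have "fmap (gen_map \<phi>) (\<lambda>_. 1) r = fadd (fminus ?R ?D1) (fsc ?s ?D2)"
    unfolding R5 using R5 \<phi>_br
    by (simp add: fmap_lin fsc_one) (rule ext, simp add: fminus_def fadd_def fsc_def algebra_simps)
  ultimately show ?thesis by (simp add: lin_closed_add[OF K] lin_closed_sc[OF K] lin_closed_minus[OF K])
next
  case (R6 a n n' i j j')
  have "aNB n' (\<phi> a) = \<phi> (aNA n' a)" "aNB n (\<phi> a) = \<phi> (aNA n a)"
    using R6 \<phi>_act by auto
  then show ?thesis
    using R6 by (simp add: fmap_lin fsc_one) (metis (no_types) \<phi>_gr tker_trels trels_br_right)
qed

lemma lift_tbr_gens:
  assumes "p \<in> tgens A N" "q \<in> tgens A N"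
  shows "cong_mod (tker B N aBN aNB) (fmap (gen_map \<phi>) (\<lambda>_. 1) (tbr aAN aNA (dl p) (dl q)))
      (tbr aBN aNB (fmap (gen_map \<phi>) (\<lambda>_. 1) (dl p)) (fmap (gen_map \<phi>) (\<lambda>_. 1) (dl q)))"
proof -
  let ?K = "tker B N aBN aNB"
  obtain a n i j a' n' i' j' where p: "p = (a, n, i, j)" "a \<in> gr A i" "n \<in> gr N j"
    and q: "q = (a', n', i', j')" "a' \<in> gr A i'" "n' \<in> gr N j'" using assms unfolding tgens_def by auto
  have "aNA n a \<in> gr A (i \<noteq> j)" using act_gr[OF actNA p(3) p(2)] by (simp add: eq_commute)
  then have "cong_mod ?K (dl (\<phi> (aNA n a), aAN a' n', i \<noteq> j, i' \<noteq> j'))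
      (dl (\<phi> (aNA n a), aBN (\<phi> a') n', i \<noteq> j, i' \<noteq> j'))"
    using \<phi>_gr q by (intro act_cong)
  then show ?thesis
    unfolding p q using \<phi>_act[OF p(3) p(2)]
    by (simp add: fmap_lin fsc_one tbr_dl cong_mod_sc[OF tker_lin_closed])
qed

lemma tensor_map_gen_map: "tensor_map A N aAN aNA B N aBN aNB (gen_map \<phi>) (\<lambda>_. 1)"
proof
  show "tgood A N aAN aNA (fvs (tgens A N))"
    by (rule tgood_fvs[OF grA grN action_graded[OF actAN] action_graded[OF actNA]])
  show "tgood B N aBN aNB (fvs (tgens B N))"
    by (rule tgood_fvs[OF grB grN action_graded[OF actBN] action_graded[OF actNB]])
  fix p assume "p \<in> tgens A N"
  then show "gen_map \<phi> p \<in> tgens B N" "tdeg (gen_map \<phi> p) = tdeg p"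
    using \<phi>_gr by (auto simp: tgens_def tdeg_def)
qed (use lift_trels lift_tbr_gens in auto)

end

lemma hom_car: "hom A B f \<Longrightarrow> x \<in> car A \<Longrightarrow> f x \<in> car B"
  unfolding hom_def by blast
lemma hom_ad: "hom A B f \<Longrightarrow> x \<in> car A \<Longrightarrow> y \<in> car A \<Longrightarrow> f (ad A x y) = ad B (f x) (f y)"
  unfolding hom_def by blast
lemma hom_sc: "hom A B f \<Longrightarrow> x \<in> car A \<Longrightarrow> f (sc A c x) = sc B c (f x)"
  unfolding hom_def by blast
lemma hom_br: "hom A B f \<Longrightarrow> x \<in> car A \<Longrightarrow> y \<in> car A \<Longrightarrow> f (br A x y) = br B (f x) (f y)"
  unfolding hom_def by blast
lemma hom_gr: "hom A B f \<Longrightarrow> x \<in> gr A b \<Longrightarrow> f x \<in> gr B b"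
  unfolding hom_def by blast

lemma tensor_ad_tker:
  fixes M :: "('m, 'k::field) lsa" and N :: "('n, 'k) lsa"
  assumes X: "X \<in> car (tensor M N a b)" and k: "k \<in> tker M N a b"
  shows "ad (tensor M N a b) X (coset (tker M N a b) k) = X"
    "ad (tensor M N a b) (coset (tker M N a b) k) X = X"
proof -
  let ?K = "tker M N a b"
  have kc: "lin_closed ?K" by (rule tker_lin_closed)
  obtain f where f: "X = coset ?K f" using X by (auto simp: tensor_simps)
  have rX: "coset ?K (rep X) = X" unfolding f by (rule coset_rep[OF kc])
  have rk: "cong_mod ?K (rep (coset ?K k)) fzero" by (rule cong_mod_trans[OF kc rep_coset_cong_mod[OF kc] cong_mod_zero[OF kc k]])
  have "cong_mod ?K (fadd (rep X) (rep (coset ?K k))) (fadd (rep X) fzero)" by (rule cong_mod_add[OF kc cong_mod_refl[OF kc] rk])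
  then have "coset ?K (fadd (rep X) (rep (coset ?K k))) = X" using coset_cong_mod[OF kc] rX by (simp add: fadd_fzero)
  then show "ad (tensor M N a b) X (coset (tker M N a b) k) = X" by (simp add: tensor_simps)
  have "cong_mod ?K (fadd (rep (coset ?K k)) (rep X)) (fadd fzero (rep X))" by (rule cong_mod_add[OF kc rk cong_mod_refl[OF kc]])
  then have "coset ?K (fadd (rep (coset ?K k)) (rep X)) = X" using coset_cong_mod[OF kc] rX by (simp add: fadd_fzero)
  then show "ad (tensor M N a b) (coset (tker M N a b) k) X = X" by (simp add: tensor_simps)
qed

lemma tensor_coset_rep: "X \<in> car (tensor M N a b) \<Longrightarrow> coset (tker M N a b) (rep X) = X"
  by (auto simp: tensor_simps coset_rep[OF tker_lin_closed])

section \<open>The direct sum acting on \<open>N\<close>\<close>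

locale dsum_tensor =
  fixes L :: "('l, 'k::field) lsa" and M :: "('m, 'k) lsa" and N :: "('n, 'k) lsa"
    and aLN :: "'l \<Rightarrow> 'n \<Rightarrow> 'n" and aNL :: "'n \<Rightarrow> 'l \<Rightarrow> 'l"
    and aMN :: "'m \<Rightarrow> 'n \<Rightarrow> 'n" and aNM :: "'n \<Rightarrow> 'm \<Rightarrow> 'm"
  assumes L: "lie_superalgebra L" and M: "lie_superalgebra M" and N: "lie_superalgebra N"
    and actLN: "is_action L N aLN" and actNL: "is_action N L aNL"
    and actMN: "is_action M N aMN" and actNM: "is_action N M aNM"
    and actions_commute: "\<forall>i j k. \<forall>l\<in>gr L i. \<forall>m\<in>gr M j. \<forall>n\<in>gr N k.
               aLN l (aMN m n) = sc N (sg (i \<and> j)) (aMN m (aLN l n))"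
    and canon_trivial_LM: "canon_trivial N (act_ideal L N aLN) M aNM aMN"
    and canon_trivial_ML: "canon_trivial N (act_ideal M N aMN) L aNL aLN"
begin

abbreviation "D \<equiv> dsum L M"
abbreviation "aDN \<equiv> dsum_act N aLN aMN"
abbreviation "aND \<equiv> act_dsum aNL aNM"

lemmas vL = lsa_vs[OF L] and vM = lsa_vs[OF M] and vN = lsa_vs[OF N]
lemmas grL = lsa_gr_car[OF L] and grM = lsa_gr_car[OF M] and grN = lsa_gr_car[OF N]
lemmas cN = v_add_car[OF vN] v_sc_car[OF vN] act_car[OF actLN] act_car[OF actMN] lsa_br_car[OF N]

lemma actions_commute_car:
  assumes l: "l \<in> gr L i" and m: "m \<in> gr M j" and n: "n \<in> car N"
  shows "aLN l (aMN m n) = sc N (sg (i \<and> j)) (aMN m (aLN l n))"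
proof -
  obtain n0 n1 where n01: "n0 \<in> gr N False" "n1 \<in> gr N True" "n = ad N n0 n1"
    using lsa_decomp[OF N n] by blast
  have c: "l \<in> car L" "m \<in> car M" "n0 \<in> car N" "n1 \<in> car N" using l m n01 grL grM grN by auto
  have i0: "aLN l (aMN m n0) = sc N (sg (i \<and> j)) (aMN m (aLN l n0))"
    using actions_commute l m n01(1) by blast
  have i1: "aLN l (aMN m n1) = sc N (sg (i \<and> j)) (aMN m (aLN l n1))"
    using actions_commute l m n01(2) by blast
  have "aLN l (aMN m n) = ad N (aLN l (aMN m n0)) (aLN l (aMN m n1))"
    using c by (simp add: n01(3) act_addr[OF actMN] act_addr[OF actLN] cN)
  also have "\<dots> = sc N (sg (i \<and> j)) (ad N (aMN m (aLN l n0)) (aMN m (aLN l n1)))"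
    using c by (simp add: i0 i1 v_sc_add[OF vN] cN)
  also have "\<dots> = sc N (sg (i \<and> j)) (aMN m (aLN l n))"
    using c by (simp add: n01(3) act_addr[OF actMN] act_addr[OF actLN] cN)
  finally show ?thesis .
qed

text \<open>The cross terms \<open>{}^l({}^{m'}n)\<close> and \<open>{}^{l'}({}^m n)\<close> are where the commutation
  hypothesis enters.\<close>

lemma dsum_act_br_left:
  assumes p: "p \<in> gr D i" and p': "p' \<in> gr D j" and n: "n \<in> car N"
  shows "aDN (br D p p') n = lsub N (aDN p (aDN p' n)) (sc N (sg (i \<and> j)) (aDN p' (aDN p n)))"
proof -
  obtain l m l' m' where lm: "p = (l, m)" "p' = (l', m')" "l \<in> gr L i" "m \<in> gr M i" "l' \<in> gr L j" "m' \<in> gr M j"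
    using p p' by auto
  have c: "l \<in> car L" "m \<in> car M" "l' \<in> car L" "m' \<in> car M" using lm grL grM by auto
  let ?s = "sg (i \<and> j)"
  have e1: "aLN (br L l l') n = lsub N (aLN l (aLN l' n)) (sc N ?s (aLN l' (aLN l n)))"
    by (rule act_br1[OF actLN lm(3) lm(5) n])
  have e2: "aMN (br M m m') n = lsub N (aMN m (aMN m' n)) (sc N ?s (aMN m' (aMN m n)))"
    by (rule act_br1[OF actMN lm(4) lm(6) n])
  have e3: "aDN p (aDN p' n) = ad N (ad N (aLN l (aLN l' n)) (aLN l (aMN m' n)))
      (ad N (aMN m (aLN l' n)) (aMN m (aMN m' n)))"
    using lm c n by (simp add: act_addr[OF actLN] act_addr[OF actMN] cN)
  have e4: "aDN p' (aDN p n) = ad N (ad N (aLN l' (aLN l n)) (aLN l' (aMN m n)))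
      (ad N (aMN m' (aLN l n)) (aMN m' (aMN m n)))"
    using lm c n by (simp add: act_addr[OF actLN] act_addr[OF actMN] cN)
  have x: "aLN l (aMN m' n) = sc N ?s (aMN m' (aLN l n))"
    by (rule actions_commute_car[OF lm(3) lm(6) n])
  have y: "aLN l' (aMN m n) = sc N ?s (aMN m (aLN l' n))"
    using actions_commute_car[OF lm(5) lm(4) n] by (cases i; cases j; simp)
  show ?thesis
    unfolding e3 e4 x y using lm(1,2) e1 e2
    by (simp, intro v_cross_rearrange[OF vN]) (use c n in \<open>simp_all add: cN\<close>)
qed

lemma dsum_act_br_right:
  assumes p: "p \<in> gr D i" and n: "n \<in> gr N j" and n': "n' \<in> car N"
  shows "aDN p (br N n n') = ad N (br N (aDN p n) n') (sc N (sg (i \<and> j)) (br N n (aDN p n')))"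
proof -
  obtain l m where lm: "p = (l, m)" "l \<in> gr L i" "m \<in> gr M i" using p by auto
  have c: "l \<in> car L" "m \<in> car M" "n \<in> car N" using lm n grL grM grN by auto
  let ?s = "sg (i \<and> j)"
  have e1: "aLN l (br N n n') = ad N (br N (aLN l n) n') (sc N ?s (br N n (aLN l n')))"
    by (rule act_br2[OF actLN lm(2) n n'])
  have e2: "aMN m (br N n n') = ad N (br N (aMN m n) n') (sc N ?s (br N n (aMN m n')))"
    by (rule act_br2[OF actMN lm(3) n n'])
  have e3: "br N (aDN p n) n' = ad N (br N (aLN l n) n') (br N (aMN m n) n')"
    using lm c n' by (simp add: lsa_br_add[OF N] cN)
  have e4: "sc N ?s (br N n (aDN p n')) =
      ad N (sc N ?s (br N n (aLN l n'))) (sc N ?s (br N n (aMN m n')))"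
    using lm c n' by (simp add: lsa_br_add[OF N] v_sc_add[OF vN] cN)
  show ?thesis
    unfolding e3 e4 using lm(1) e1 e2 c n'
    by (simp, intro v_swap4[OF vN, symmetric]) (simp_all add: cN)
qed

lemma dsum_act_action: "is_action D N aDN"
  unfolding is_action_def
proof (intro conjI)
  show "\<forall>p\<in>car D. \<forall>n\<in>car N. aDN p n \<in> car N"
    by (auto simp: cN)
  show "\<forall>p\<in>car D. \<forall>p'\<in>car D. \<forall>n\<in>car N. aDN (ad D p p') n = ad N (aDN p n) (aDN p' n)"
    by (auto simp: act_addl[OF actLN] act_addl[OF actMN] v_swap4[OF vN] cN)
  show "\<forall>c. \<forall>p\<in>car D. \<forall>n\<in>car N. aDN (sc D c p) n = sc N c (aDN p n)"
    by (auto simp: act_scl[OF actLN] act_scl[OF actMN] v_sc_add[OF vN] cN)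
  show "\<forall>p\<in>car D. \<forall>n\<in>car N. \<forall>n'\<in>car N. aDN p (ad N n n') = ad N (aDN p n) (aDN p n')"
    by (auto simp: act_addr[OF actLN] act_addr[OF actMN] v_swap4[OF vN] cN)
  show "\<forall>c. \<forall>p\<in>car D. \<forall>n\<in>car N. aDN p (sc N c n) = sc N c (aDN p n)"
    by (auto simp: act_scr[OF actLN] act_scr[OF actMN] v_sc_add[OF vN] cN)
  show "\<forall>i j. \<forall>p\<in>gr D i. \<forall>n\<in>gr N j. aDN p n \<in> gr N (i \<noteq> j)"
    by (auto simp: lsa_gr_ad[OF N] act_gr_simp[OF actLN] act_gr_simp[OF actMN])
qed (use dsum_act_br_left dsum_act_br_right in blast)+

lemma act_dsum_action: "is_action N D aND"
  unfolding is_action_def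
  by (auto simp: act_car[OF actNL] act_car[OF actNM] act_addl[OF actNL] act_addl[OF actNM]
      act_scl[OF actNL] act_scl[OF actNM] act_addr[OF actNL] act_addr[OF actNM]
      act_scr[OF actNL] act_scr[OF actNM] act_gr_simp[OF actNL] act_gr_simp[OF actNM]
      act_br1[OF actNL] act_br1[OF actNM] act_br2[OF actNL] act_br2[OF actNM])

end

lemma tker_zero_factor:
  assumes "vector_space A" and "zr A \<in> gr A i" and "n \<in> gr N j"
  shows "dl (zr A, n, i, j) \<in> tker A N a b"
proof -
  have r: "fminus (fsc 0 (dl (zr A, n, i, j))) (dl (sc A 0 (zr A), n, i, j)) \<in> tker A N a b"
    by (rule tker_trels, rule trels_sc_left) (use assms in auto)
  have "dl (zr A, n, i, j) = fsc (-1) (fminus (fsc 0 (dl (zr A, n, i, j))) (dl (sc A 0 (zr A), n, i, j)))"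
    using v_sc_zr[OF assms(1)] by (simp add: fminus_def fsc_def fadd_def)
  then show ?thesis using lin_closed_sc[OF tker_lin_closed r] by metis
qed

context dsum_tensor
begin

lemma tker_L_act_M:
  "l \<in> gr L i \<Longrightarrow> m \<in> gr M a \<Longrightarrow> n \<in> gr N b \<Longrightarrow> dl (l, aMN m n, i, a \<noteq> b) \<in> tker L N aLN aNL"
  by (rule canon_trivial_tker[OF L N actLN actNL canon_trivial_ML act_gr[OF actMN] act_ideal_mem[OF M N]])

lemma tker_M_act_L:
  "m \<in> gr M i \<Longrightarrow> l \<in> gr L a \<Longrightarrow> n \<in> gr N b \<Longrightarrow> dl (m, aLN l n, i, a \<noteq> b) \<in> tker M N aMN aNM"
  by (rule canon_trivial_tker[OF M N actMN actNM canon_trivial_LM act_gr[OF actLN] act_ideal_mem[OF L N]])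

lemmas gr_closed_L = lsa_gr_closed[OF L] and gr_closed_M = lsa_gr_closed[OF M]
  and gr_closed_N = lsa_gr_closed[OF N]
lemmas gr_closed_D = dsum_gr_closed[OF gr_closed_L gr_closed_M]

lemma zr_ops:
  "sc M c (zr M) = zr M" "ad M (zr M) (zr M) = zr M" "br M (zr M) (zr M) = zr M"
  "sc L c (zr L) = zr L" "ad L (zr L) (zr L) = zr L" "br L (zr L) (zr L) = zr L"
  by (simp_all add: v_sc_zr[OF vM] v_zero_add[OF vM v_zr_car[OF vM]] lsa_br_zr[OF M v_zr_car[OF vM]]
      v_sc_zr[OF vL] v_zero_add[OF vL v_zr_car[OF vL]] lsa_br_zr[OF L v_zr_car[OF vL]])

lemma tensor_map_fst: "tensor_map D N aDN aND L N aLN aNL (gen_map fst) (\<lambda>_. 1)"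
proof (rule factor_map.tensor_map_gen_map[OF factor_map.intro, OF gr_closed_D gr_closed_L gr_closed_N dsum_act_action act_dsum_action actLN actNL])
  fix p n b i j k assume p: "p \<in> gr D i" and n: "n \<in> gr N j" and b: "b \<in> gr L k"
  obtain l m where lm: "p = (l, m)" "l \<in> gr L i" "m \<in> gr M i" using p by auto
  let ?x = "aLN l n" and ?y = "aMN m n" and ?d = "i \<noteq> j"
  have rel: "fminus (dl (b, ad N ?x ?y, k, ?d)) (fadd (dl (b, ?x, k, ?d)) (dl (b, ?y, k, ?d)))
      \<in> tker L N aLN aNL"
    using b act_gr[OF actLN lm(2) n] act_gr[OF actMN lm(3) n] by (intro tker_trels trels_add_right)
  have junk: "dl (b, ?y, k, ?d) \<in> tker L N aLN aNL" by (rule tker_L_act_M[OF b lm(3) n])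
  have split: "fminus (dl (b, ad N ?x ?y, k, ?d)) (dl (b, ?x, k, ?d)) =
      fadd (fminus (dl (b, ad N ?x ?y, k, ?d)) (fadd (dl (b, ?x, k, ?d)) (dl (b, ?y, k, ?d))))
        (dl (b, ?y, k, ?d))"
    by (rule ext) (simp add: fminus_def fadd_def fsc_def)
  show "cong_mod (tker L N aLN aNL) (dl (b, aDN p n, k, ?d)) (dl (b, aLN (fst p) n, k, ?d))"
    unfolding cong_mod_def lm(1) dsum_act_simp fst_conv split by (rule lin_closed_add[OF tker_lin_closed rel junk])
qed auto

lemma tensor_map_snd: "tensor_map D N aDN aND M N aMN aNM (gen_map snd) (\<lambda>_. 1)"
proof (rule factor_map.tensor_map_gen_map[OF factor_map.intro, OF gr_closed_D gr_closed_M gr_closed_N dsum_act_action act_dsum_action actMN actNM])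
  fix p n b i j k assume p: "p \<in> gr D i" and n: "n \<in> gr N j" and b: "b \<in> gr M k"
  obtain l m where lm: "p = (l, m)" "l \<in> gr L i" "m \<in> gr M i" using p by auto
  let ?x = "aLN l n" and ?y = "aMN m n" and ?d = "i \<noteq> j"
  have rel: "fminus (dl (b, ad N ?x ?y, k, ?d)) (fadd (dl (b, ?x, k, ?d)) (dl (b, ?y, k, ?d)))
      \<in> tker M N aMN aNM"
    using b act_gr[OF actLN lm(2) n] act_gr[OF actMN lm(3) n] by (intro tker_trels trels_add_right)
  have junk: "dl (b, ?x, k, ?d) \<in> tker M N aMN aNM" by (rule tker_M_act_L[OF b lm(2) n])
  have split: "fminus (dl (b, ad N ?x ?y, k, ?d)) (dl (b, ?y, k, ?d)) =
      fadd (fminus (dl (b, ad N ?x ?y, k, ?d)) (fadd (dl (b, ?x, k, ?d)) (dl (b, ?y, k, ?d))))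
        (dl (b, ?x, k, ?d))"
    by (rule ext) (simp add: fminus_def fadd_def fsc_def)
  show "cong_mod (tker M N aMN aNM) (dl (b, aDN p n, k, ?d)) (dl (b, aMN (snd p) n, k, ?d))"
    unfolding cong_mod_def lm(1) dsum_act_simp snd_conv split
    by (rule lin_closed_add[OF tker_lin_closed rel junk])
qed auto

lemma tensor_map_inl: "tensor_map L N aLN aNL D N aDN aND (gen_map (\<lambda>l. (l, zr M))) (\<lambda>_. 1)"
proof (rule factor_map.tensor_map_gen_map[OF factor_map.intro, OF gr_closed_L gr_closed_D gr_closed_N actLN actNL dsum_act_action act_dsum_action])
  fix l n b i j k assume l: "l \<in> gr L i" and n: "n \<in> gr N j"
  have "aDN (l, zr M) n = aLN l n"
    using act_zr_l[OF actMN vM vN] v_add_zero[OF vN] act_car[OF actLN] grL grN l n by simp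
  then show "cong_mod (tker D N aDN aND) (dl (b, aLN l n, k, i \<noteq> j)) (dl (b, aDN (l, zr M) n, k, i \<noteq> j))"
    by (simp add: cong_mod_refl[OF tker_lin_closed])
qed (auto simp: lsa_zr_gr[OF M] zr_ops act_zr_r[OF actNM vM] grN)

lemma tensor_map_inr: "tensor_map M N aMN aNM D N aDN aND (gen_map (\<lambda>m. (zr L, m))) (\<lambda>_. 1)"
proof (rule factor_map.tensor_map_gen_map[OF factor_map.intro, OF gr_closed_M gr_closed_D gr_closed_N actMN actNM dsum_act_action act_dsum_action])
  fix m n b i j k assume m: "m \<in> gr M i" and n: "n \<in> gr N j"
  have "aDN (zr L, m) n = aMN m n"
    using act_zr_l[OF actLN vL vN] v_zero_add[OF vN] act_car[OF actMN] grM grN m n by simp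
  then show "cong_mod (tker D N aDN aND) (dl (b, aMN m n, k, i \<noteq> j)) (dl (b, aDN (zr L, m) n, k, i \<noteq> j))"
    by (simp add: cong_mod_refl[OF tker_lin_closed])
qed (auto simp: lsa_zr_gr[OF L] zr_ops act_zr_r[OF actNL vL] grN)

end

sublocale dsum_tensor \<subseteq> pr1: tensor_map D N aDN aND L N aLN aNL "gen_map fst" "\<lambda>_. 1"
  by (rule tensor_map_fst)
sublocale dsum_tensor \<subseteq> pr2: tensor_map D N aDN aND M N aMN aNM "gen_map snd" "\<lambda>_. 1"
  by (rule tensor_map_snd)
sublocale dsum_tensor \<subseteq> in1: tensor_map L N aLN aNL D N aDN aND "gen_map (\<lambda>l. (l, zr M))" "\<lambda>_. 1"
  by (rule tensor_map_inl)
sublocale dsum_tensor \<subseteq> in2: tensor_map M N aMN aNM D N aDN aND "gen_map (\<lambda>m. (zr L, m))" "\<lambda>_. 1"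
  by (rule tensor_map_inr)

context dsum_tensor
begin

lemma pr1_in1: "f \<in> fvs (tgens L N) \<Longrightarrow> pr1.lift (in1.lift f) = f"
  by (simp add: fmap_comp) (rule fmap_id_on, auto simp: gen_map_def split: prod.splits)

lemma pr2_in2: "f \<in> fvs (tgens M N) \<Longrightarrow> pr2.lift (in2.lift f) = f"
  by (simp add: fmap_comp) (rule fmap_id_on, auto simp: gen_map_def split: prod.splits)

lemma pr1_in2: "f \<in> fvs (tgens M N) \<Longrightarrow> pr1.lift (in2.lift f) \<in> tker L N aLN aNL"
  by (auto simp: fmap_comp tgens_def intro!: fmap_lin_closed[OF tker_lin_closed] tker_zero_factor[OF vL lsa_zr_gr[OF L]])

lemma pr2_in1: "f \<in> fvs (tgens L N) \<Longrightarrow> pr2.lift (in1.lift f) \<in> tker M N aMN aNM"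
  by (auto simp: fmap_comp tgens_def intro!: fmap_lin_closed[OF tker_lin_closed] tker_zero_factor[OF vM lsa_zr_gr[OF M]])

lemma in1_pr1_add_in2_pr2:
  "f \<in> fvs (tgens D N) \<Longrightarrow>
    cong_mod (tker D N aDN aND) (fadd (in1.lift (pr1.lift f)) (in2.lift (pr2.lift f))) f"
proof (simp add: fmap_comp, rule fmap_fadd_cong_mod[OF tker_lin_closed])
  let ?K = "tker D N aDN aND"
  fix p assume "p \<in> tgens D N"
  then obtain l m n i j where p: "p = ((l, m), n, i, j)" "l \<in> gr L i" "m \<in> gr M i" "n \<in> gr N j"
    unfolding tgens_def by auto
  have "ad D (l, zr M) (zr L, m) = (l, m)"
    using p grL grM by (simp add: v_add_zero[OF vL] v_zero_add[OF vM])
  moreover have "fminus (dl (ad D (l, zr M) (zr L, m), n, i, j))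
      (fadd (dl ((l, zr M), n, i, j)) (dl ((zr L, m), n, i, j))) \<in> ?K"
    using p by (intro tker_trels trels_add_left) (auto simp: lsa_zr_gr[OF L] lsa_zr_gr[OF M])
  ultimately have "cong_mod ?K (dl p) (fadd (dl ((l, zr M), n, i, j)) (dl ((zr L, m), n, i, j)))"
    unfolding cong_mod_def p(1) by simp
  then show "cong_mod ?K (fadd (dl ((gen_map (\<lambda>l. (l, zr M)) \<circ> gen_map fst) p))
      (dl ((gen_map (\<lambda>m. (zr L, m)) \<circ> gen_map snd) p))) (dl p)"
    unfolding p(1) by (simp add: cong_mod_sym[OF tker_lin_closed])
qed

section \<open>The isomorphism\<close>

abbreviation "TD \<equiv> tensor D N aDN aND"
abbreviation "TL \<equiv> tensor L N aLN aNL"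
abbreviation "TM \<equiv> tensor M N aMN aNM"

definition tensor_split where "tensor_split Z = (pr1.induced Z, pr2.induced Z)"

definition tensor_merge where "tensor_merge XY = ad TD (in1.induced (fst XY)) (in2.induced (snd XY))"

lemma tensor_split_hom: "hom TD (dsum TL TM) tensor_split"
  using hom_car[OF pr1.induced_hom] hom_car[OF pr2.induced_hom] hom_ad[OF pr1.induced_hom] hom_ad[OF pr2.induced_hom]
    hom_sc[OF pr1.induced_hom] hom_sc[OF pr2.induced_hom] hom_br[OF pr1.induced_hom] hom_br[OF pr2.induced_hom]
    hom_gr[OF pr1.induced_hom] hom_gr[OF pr2.induced_hom]
  unfolding hom_def tensor_split_def by auto

lemma tensor_split_car: "Z \<in> car TD \<Longrightarrow> tensor_split Z \<in> car TL \<times> car TM"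
  using hom_car[OF pr1.induced_hom] hom_car[OF pr2.induced_hom] by (simp add: tensor_split_def)

lemma tensor_merge_car: "XY \<in> car TL \<times> car TM \<Longrightarrow> tensor_merge XY \<in> car TD"
  using in1.rep_car2 in2.rep_car2 hom_car[OF in1.induced_hom] hom_car[OF in2.induced_hom]
  by (auto simp: tensor_merge_def tensor_simps intro!: imageI fvs_fadd)

lemma tensor_split_merge:
  assumes X: "X \<in> car TL" and Y: "Y \<in> car TM"
  shows "tensor_split (tensor_merge (X, Y)) = (X, Y)"
proof -
  have rX: "rep X \<in> fvs (tgens L N)" and rY: "rep Y \<in> fvs (tgens M N)"
    using pr1.rep_car2[OF X] pr2.rep_car2[OF Y] .
  have A: "in1.induced X = coset (tker D N aDN aND) (in1.lift (rep X))"
    and B: "in2.induced Y = coset (tker D N aDN aND) (in2.lift (rep Y))" by (simp_all add: quot_map_def)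
  have Ac: "in1.induced X \<in> car TD" and Bc: "in2.induced Y \<in> car TD"
    using hom_car[OF in1.induced_hom X] hom_car[OF in2.induced_hom Y] .
  have "pr1.induced (in1.induced X) = X"
    unfolding A using pr1.induced_coset[OF in1.lift_fvs[OF rX]] pr1_in1[OF rX] tensor_coset_rep[OF X] by simp
  moreover have "pr1.induced (in2.induced Y) = coset (tker L N aLN aNL) (pr1.lift (in2.lift (rep Y)))"
    unfolding B using pr1.induced_coset[OF in2.lift_fvs[OF rY]] by simp
  moreover have "pr2.induced (in1.induced X) = coset (tker M N aMN aNM) (pr2.lift (in1.lift (rep X)))"
    unfolding A using pr2.induced_coset[OF in1.lift_fvs[OF rX]] by simp
  moreover have "pr2.induced (in2.induced Y) = Y"
    unfolding B using pr2.induced_coset[OF in2.lift_fvs[OF rY]] pr2_in2[OF rY] tensor_coset_rep[OF Y] by simp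
  ultimately show ?thesis
    unfolding tensor_split_def tensor_merge_def
    using hom_ad[OF pr1.induced_hom Ac Bc] hom_ad[OF pr2.induced_hom Ac Bc]
      tensor_ad_tker(1)[OF X pr1_in2[OF rY]] tensor_ad_tker(2)[OF Y pr2_in1[OF rX]]
    by simp
qed

lemma tensor_merge_split:
  assumes Z: "Z \<in> car TD"
  shows "tensor_merge (tensor_split Z) = Z"
proof -
  let ?K = "tker D N aDN aND"
  have rZ: "rep Z \<in> fvs (tgens D N)" by (rule pr1.rep_car1[OF Z])
  have "in1.induced (pr1.induced Z) = coset ?K (in1.lift (pr1.lift (rep Z)))"
    using in1.induced_coset[OF pr1.lift_fvs[OF rZ]] by (simp add: quot_map_def)
  moreover have "in2.induced (pr2.induced Z) = coset ?K (in2.lift (pr2.lift (rep Z)))"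
    using in2.induced_coset[OF pr2.lift_fvs[OF rZ]] by (simp add: quot_map_def)
  ultimately have "tensor_merge (tensor_split Z) =
      coset ?K (fadd (rep (coset ?K (in1.lift (pr1.lift (rep Z))))) (rep (coset ?K (in2.lift (pr2.lift (rep Z))))))"
    unfolding tensor_merge_def tensor_split_def by (simp add: tensor_simps)
  also have "\<dots> = coset ?K (rep Z)"
    by (rule coset_cong_mod[OF tker_lin_closed], rule cong_mod_trans[OF tker_lin_closed
        cong_mod_add[OF tker_lin_closed rep_coset_cong_mod[OF tker_lin_closed] rep_coset_cong_mod[OF tker_lin_closed]]
        in1_pr1_add_in2_pr2[OF rZ]])
  also have "\<dots> = Z" by (rule tensor_coset_rep[OF Z])
  finally show ?thesis .
qed

lemma tensor_split_tsym:
  assumes "l \<in> gr L i" "m \<in> gr M i" "n \<in> gr N j"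
  shows "tensor_split (tsym D N aDN aND (l, m) n i j) = (tsym L N aLN aNL l n i j, tsym M N aMN aNM m n i j)"
proof -
  have d: "dl ((l, m), n, i, j) \<in> fvs (tgens D N)" using assms by (intro fvs_dl) simp
  show ?thesis
    unfolding tensor_split_def tsym_def using pr1.induced_coset[OF d] pr2.induced_coset[OF d]
    by (simp add: fmap_dl fsc_one)
qed

lemma tensor_dsum_iso:
  "iso TD (dsum TL TM) tensor_split
   \<and> (\<forall>l m n i j. l \<in> gr L i \<and> m \<in> gr M i \<and> n \<in> gr N j \<longrightarrow>
        tensor_split (tsym D N aDN aND (l, m) n i j) = (tsym L N aLN aNL l n i j, tsym M N aMN aNM m n i j))"
proof -
  have "bij_betw tensor_split (car TD) (car TL \<times> car TM)"
    using tensor_merge_split tensor_split_merge tensor_split_car tensor_merge_car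
    by (intro bij_betw_byWitness[where f'=tensor_merge]) fastforce+
  then show ?thesis
    using tensor_split_hom tensor_split_tsym unfolding iso_def by simp
qed

end

theorem mainTheorem9:
  fixes L :: "('l, 'k::field) lsa" and M :: "('m, 'k) lsa" and N :: "('n, 'k) lsa"
    and aLN :: "'l \<Rightarrow> 'n \<Rightarrow> 'n" and aNL :: "'n \<Rightarrow> 'l \<Rightarrow> 'l"
    and aMN :: "'m \<Rightarrow> 'n \<Rightarrow> 'n" and aNM :: "'n \<Rightarrow> 'm \<Rightarrow> 'm"
  assumes char2: "(2::'k) \<noteq> 0" and char3: "(3::'k) \<noteq> 0"
    and L: "lie_superalgebra L" and M: "lie_superalgebra M" and N: "lie_superalgebra N"
    and actLN: "is_action L N aLN" and actNL: "is_action N L aNL"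
    and compLN: "compatible L N aLN aNL"
    and actMN: "is_action M N aMN" and actNM: "is_action N M aNM"
    and compMN: "compatible M N aMN aNM"
    and ii: "\<forall>i j k. \<forall>l\<in>gr L i. \<forall>m\<in>gr M j. \<forall>n\<in>gr N k.
               aLN l (aMN m n) = sc N (sg (i \<and> j)) (aMN m (aLN l n))"
    and iii1: "canon_trivial N (act_ideal L N aLN) M aNM aMN"
    and iii2: "canon_trivial N (act_ideal M N aMN) L aNL aLN"
  shows "is_action (dsum L M) N (dsum_act N aLN aMN)
       \<and> is_action N (dsum L M) (act_dsum aNL aNM)
       \<and> (\<exists>\<phi>. iso (tensor (dsum L M) N (dsum_act N aLN aMN) (act_dsum aNL aNM))
                   (dsum (tensor L N aLN aNL) (tensor M N aMN aNM)) \<phi>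
             \<and> (\<forall>l m n i j. l \<in> gr L i \<and> m \<in> gr M i \<and> n \<in> gr N j \<longrightarrow>
                  \<phi> (tsym (dsum L M) N (dsum_act N aLN aMN) (act_dsum aNL aNM) (l, m) n i j)
                  = (tsym L N aLN aNL l n i j, tsym M N aMN aNM m n i j)))"
proof -
  interpret dsum_tensor L M N aLN aNL aMN aNM
    by unfold_locales (fact L M N actLN actNL actMN actNM ii iii1 iii2)+
  show ?thesis using dsum_act_action act_dsum_action tensor_dsum_iso by blast
qed

end
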